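(* Let $\Gamma$ be a gain operator on $\ell^\infty_+(\mathcal I)$ with $|\mathcal I|<\infty$ whose interconnection graph $\mathcal G$ is strongly connected. The following are equivalent: (a) there exists a path of strict decay for $\Gamma$; (b) there exists $\rho\in\mathcal K_\infty$ such that $\Gamma_\rho$ satisfies the NJI condition.
   Context: Let $\mathcal I$ be a nonempty countable index set; $\ell^\infty_+(\mathcal I)$ is the cone of nonnegative real families $s=(s_i)_{i\in\mathcal I}$ with $\|s\|:=\sup_i|s_i|<\infty$, ordered componentwise; $s>0$ means $s\ge0$, $s\ne0$; $\mathbf 1$ is the all-ones vector. $\mathcal K_\infty$: continuous strictly increasing unbounded $\gamma:\mathbb R_+\to\mathbb R_+$ with $\gamma(0)=0$, acting componentwise. For $\mathcal J\subset\mathcal I$, $s_{|\mathcal J}$ agrees with $s$ on $\mathcal J$ and is $0$ elsewhere. Gain operator: for each $i$ a finite (possibly empty) $\mathcal I_i\subset\mathcal I\setminus\{i\}$; directed graph $\mathcal G$ with vertices $\mathcal I$ and edges $ji$, $j\in\mathcal I_i$; a pointwise equicontinuous family $\gamma_{ij}\in\mathcal K_\infty$ ($ji\in E(\mathcal G)$); functions $\mu_i:\ell^\infty_+(\mathcal I)\to[0,\infty]$ with (M1) some $\xi\in\mathcal K_\infty$ has $\mu_i(0)=0$, $\mu_i(s)\ge\xi(\|s\|)$; (M2) $\mu_i$ monotone; (M3) for each finite $\mathcal J$, $\mu_i$ restricted to vectors vanishing off $\mathcal J$ is finite-valued and continuous; (M4) for each norm-bounded $A$ and $\varepsilon>0$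 there is $\delta>0$ with $\sup_i|\mu_i(s_{|\mathcal I_i})-\mu_i(s^0_{|\mathcal I_i})|\le\varepsilon$ whenever $s^0\in A$, $\|s-s^0\|\le\delta$. $\Gamma_i(s):=\mu_i([\gamma_{ij}(s_j)]_{j\in\mathcal I_i})$ (argument zero outside $\mathcal I_i$). $\Gamma_\rho:=(\mathrm{id}+\rho)\circ\Gamma$. $\mathcal G$ is strongly connected if for all $i,j$ there is a directed path from $i$ to $j$. $T$ satisfies the NJI condition if $T(s)\ge s$ fails for every $s>0$. A path of strict decay for $\Gamma$ is a map $\sigma:\mathbb R_+\to\ell^\infty_+(\mathcal I)$ such that: (i) for some $\rho\in\mathcal K_\infty$, $\Gamma_\rho(\sigma(r))\le\sigma(r)$ for all $r\ge0$; (ii) $\varphi_{\min}(r)\mathbf 1\le\sigma(r)\le\varphi_{\max}(r)\mathbf 1$ for some $\varphi_{\min},\varphi_{\max}\in\mathcal K_\infty$; (iii) each $\sigma_i\in\mathcal K_\infty$; (iv) for each compact $K\subset(0,\infty)$ there are $0<l\le L$ with $l|r_1-r_2|\le|\sigma_i^{-1}(r_1)-\sigma_i^{-1}(r_2)|\le L|r_1-r_2|$ for all $r_1,r_2\in K$, $i\in\mathcal I$. *)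

theory Defs
  imports "HOL-Analysis.Analysis"
begin

text \<open>The finite index set I is modelled by a finite type 'i (nonempty automatically).
 Elements of l-infinity_+ are nonnegative functions 'i => real.\<close>

definition nonneg :: "('i \<Rightarrow> real) \<Rightarrow> bool" where
  "nonneg s \<longleftrightarrow> (\<forall>i. 0 \<le> s i)"

definition supnorm :: "('i::finite \<Rightarrow> real) \<Rightarrow> real" where
  "supnorm s = Max (range (\<lambda>i. \<bar>s i\<bar>))"

definition restr :: "('i \<Rightarrow> real) \<Rightarrow> 'i set \<Rightarrow> ('i \<Rightarrow> real)" where
  "restr s J = (\<lambda>i. if i \<in> J then s i else 0)"

text \<open>Class K-infinity, functions on R_+ (values at negative arguments are irrelevant).\<close>
definition Kinf :: "(real \<Rightarrow> real) \<Rightarrow> bool" where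
  "Kinf g \<longleftrightarrow> continuous_on {0..} g \<and> strict_mono_on {0..} g \<and> g 0 = 0
      \<and> (\<forall>M. \<exists>r\<ge>0. M \<le> g r)"

text \<open>Gain operator data: neighbour sets Iset i (finite, not containing i), gains gam i j
  for edges j -> i, and monotone aggregation functions mu i with values in [0,\<infinity>].\<close>
definition gain_operator ::
  "('i::finite \<Rightarrow> 'i set) \<Rightarrow> ('i \<Rightarrow> 'i \<Rightarrow> real \<Rightarrow> real) \<Rightarrow> ('i \<Rightarrow> ('i \<Rightarrow> real) \<Rightarrow> ennreal) \<Rightarrow> bool"
  where
  "gain_operator Iset gam mu \<longleftrightarrow>
     (\<forall>i. finite (Iset i) \<and> i \<notin> Iset i)
   \<and> (\<forall>i. \<forall>j\<in>Iset i. Kinf (gam i j))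
   \<and> (\<forall>r\<ge>0. \<forall>\<epsilon>>0. \<exists>\<delta>>0. \<forall>i. \<forall>j\<in>Iset i. \<forall>r'\<ge>0.
          \<bar>r' - r\<bar> < \<delta> \<longrightarrow> \<bar>gam i j r' - gam i j r\<bar> < \<epsilon>)
   \<and> (\<exists>\<xi>. Kinf \<xi> \<and> (\<forall>i. mu i (\<lambda>_. 0) = 0 \<and>
          (\<forall>s. nonneg s \<longrightarrow> ennreal (\<xi> (supnorm s)) \<le> mu i s)))
   \<and> (\<forall>i s t. nonneg s \<and> nonneg t \<and> (\<forall>k. s k \<le> t k) \<longrightarrow> mu i s \<le> mu i t)
   \<and> (\<forall>i J. finite J \<longrightarrow>
          (\<forall>s. nonneg s \<and> (\<forall>k. k \<notin> J \<longrightarrow> s k = 0) \<longrightarrow> mu i s < \<infinity>)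
        \<and> (\<forall>s0. nonneg s0 \<and> (\<forall>k. k \<notin> J \<longrightarrow> s0 k = 0) \<longrightarrow>
             (\<forall>\<epsilon>>0. \<exists>\<delta>>0. \<forall>s. nonneg s \<and> (\<forall>k. k \<notin> J \<longrightarrow> s k = 0)
                 \<and> supnorm (\<lambda>k. s k - s0 k) < \<delta> \<longrightarrow>
                 \<bar>enn2real (mu i s) - enn2real (mu i s0)\<bar> < \<epsilon>)))
   \<and> (\<forall>A. (\<forall>s\<in>A. nonneg s) \<and> (\<exists>B. \<forall>s\<in>A. supnorm s \<le> B) \<longrightarrow>
          (\<forall>\<epsilon>>0. \<exists>\<delta>>0. \<forall>s0\<in>A. \<forall>s. nonneg s \<and> supnorm (\<lambda>k. s k - s0 k) \<le> \<delta> \<longrightarrow>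
              (\<forall>i. \<bar>enn2real (mu i (restr s (Iset i))) - enn2real (mu i (restr s0 (Iset i)))\<bar> \<le> \<epsilon>)))"

text \<open>Gamma_i(s) = mu_i([gam_ij(s_j)]_{j in I_i}); finite by (M3).\<close>
definition Gam ::
  "('i \<Rightarrow> 'i set) \<Rightarrow> ('i \<Rightarrow> 'i \<Rightarrow> real \<Rightarrow> real) \<Rightarrow> ('i \<Rightarrow> ('i \<Rightarrow> real) \<Rightarrow> ennreal)
     \<Rightarrow> ('i \<Rightarrow> real) \<Rightarrow> ('i \<Rightarrow> real)" where
  "Gam Iset gam mu s = (\<lambda>i. enn2real (mu i (\<lambda>j. if j \<in> Iset i then gam i j (s j) else 0)))"

definition Gam_rho ::
  "(real \<Rightarrow> real) \<Rightarrow> ('i \<Rightarrow> 'i set) \<Rightarrow> ('i \<Rightarrow> 'i \<Rightarrow> real \<Rightarrow> real) \<Rightarrow> ('i \<Rightarrow> ('i \<Rightarrow> real) \<Rightarrow> ennreal)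
     \<Rightarrow> ('i \<Rightarrow> real) \<Rightarrow> ('i \<Rightarrow> real)" where
  "Gam_rho \<rho> Iset gam mu s = (\<lambda>i. Gam Iset gam mu s i + \<rho> (Gam Iset gam mu s i))"

text \<open>Interconnection graph: edge j -> i iff j in Iset i.\<close>
definition strongly_connected :: "('i \<Rightarrow> 'i set) \<Rightarrow> bool" where
  "strongly_connected Iset \<longleftrightarrow> (\<forall>i j. (i, j) \<in> {(a, b). a \<in> Iset b}\<^sup>*)"

definition NJI :: "(('i \<Rightarrow> real) \<Rightarrow> ('i \<Rightarrow> real)) \<Rightarrow> bool" where
  "NJI T \<longleftrightarrow> \<not> (\<exists>s. nonneg s \<and> s \<noteq> (\<lambda>_. 0) \<and> (\<forall>i. s i \<le> T s i))"

definition path_strict_decay ::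
  "('i \<Rightarrow> 'i set) \<Rightarrow> ('i \<Rightarrow> 'i \<Rightarrow> real \<Rightarrow> real) \<Rightarrow> ('i \<Rightarrow> ('i \<Rightarrow> real) \<Rightarrow> ennreal)
     \<Rightarrow> (real \<Rightarrow> 'i \<Rightarrow> real) \<Rightarrow> bool" where
  "path_strict_decay Iset gam mu \<sigma> \<longleftrightarrow>
     (\<exists>\<rho>. Kinf \<rho> \<and> (\<forall>r\<ge>0. \<forall>i. Gam_rho \<rho> Iset gam mu (\<sigma> r) i \<le> \<sigma> r i))
   \<and> (\<exists>\<phi>min \<phi>max. Kinf \<phi>min \<and> Kinf \<phi>max \<and>
        (\<forall>r\<ge>0. \<forall>i. \<phi>min r \<le> \<sigma> r i \<and> \<sigma> r i \<le> \<phi>max r))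
   \<and> (\<forall>i. Kinf (\<lambda>r. \<sigma> r i))
   \<and> (\<forall>K. compact K \<and> K \<subseteq> {0<..} \<longrightarrow>
        (\<exists>l L. 0 < l \<and> l \<le> L \<and> (\<forall>r1\<in>K. \<forall>r2\<in>K. \<forall>i.
           l * \<bar>r1 - r2\<bar> \<le> \<bar>the_inv_into {0..} (\<lambda>r. \<sigma> r i) r1 - the_inv_into {0..} (\<lambda>r. \<sigma> r i) r2\<bar>
         \<and> \<bar>the_inv_into {0..} (\<lambda>r. \<sigma> r i) r1 - the_inv_into {0..} (\<lambda>r. \<sigma> r i) r2\<bar> \<le> L * \<bar>r1 - r2\<bar>)))"

end

theory Submission
  imports Defs
begin

text \<open>
  If \<open>\<sigma>\<close> is a path of strict decay for \<open>\<Gamma>\<^sub>\<rho>\<close>, then \<open>\<Gamma>\<^bsub>\<rho>/2\<^esub>\<close> has no joint increase: a point \<open>s > 0\<close>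
  with \<open>s \<le> \<Gamma>\<^bsub>\<rho>/2\<^esub>(s)\<close> lies below some \<open>\<sigma>(R)\<close> and touches it in a component \<open>k\<close>, and comparing
  both inequalities at \<open>k\<close> leaves no room for \<open>\<rho>\<close>.

  Conversely, let \<open>\<Gamma>\<^sub>\<rho>\<close> satisfy NJI. Brouwer's theorem on the simplices \<open>\<Sum>s = R\<close> yields decay
  points \<open>\<Gamma>\<^sub>\<rho>(s) \<le> s\<close> of every size, and the iteration \<open>s \<mapsto> max (\<Gamma>\<^sub>\<rho>(s)) (s/2)\<close> from such a
  point descends to \<open>0\<close>, since a positive limit would be a joint increase. Interpolating linearly
  between the iterates gives monotone paths \<open>f\<close> of decay points with \<open>\<Sum>f(r) = r\<close> on \<open>[0, R]\<close>. Their
  pointwise infimum, in the limit \<open>R \<rightarrow> \<infinity>\<close>, is a monotone 1-Lipschitz path of decay points on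
  \<open>[0, \<infinity>)\<close>, which strong connectivity makes positive and unbounded. Slopes locally bounded away
  from \<open>0\<close> and \<open>\<infinity>\<close>, hence bi-Lipschitz inverses, are obtained by subtracting a margin \<open>\<kappa>/(1 + r)\<close> on
  \<open>[1, \<infinity>)\<close> and by a descent with strictly decreasing factors on \<open>(0, 1]\<close>, at the price of
  replacing \<open>\<rho>\<close> by \<open>\<rho>/4\<close>.
\<close>

section \<open>Finite families\<close>

lemma finite_uniform_bound:
  fixes P :: "'i::finite \<Rightarrow> 'a::linorder \<Rightarrow> bool"
  assumes "\<And>i. \<exists>N. P i N" and "\<And>i N N'. P i N \<Longrightarrow> N \<le> N' \<Longrightarrow> P i N'"
  shows "\<exists>N. \<forall>i. P i N"
proof -
  obtain N where N: "\<And>i. P i (N i)" using assms(1) by metis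
  have "P i (Max (range N))" for i
    by (rule assms(2)[OF N]) (rule Max_ge; simp)
  then show ?thesis by blast
qed

lemma finite_uniform_pos:
  fixes P :: "'i::finite \<Rightarrow> real \<Rightarrow> bool"
  assumes "\<And>i. \<exists>d>0. P i d" and "\<And>i d d'. P i d \<Longrightarrow> 0 < d' \<Longrightarrow> d' \<le> d \<Longrightarrow> P i d'"
  shows "\<exists>d>0. \<forall>i. P i d"
proof -
  obtain d where d: "\<And>i. 0 < d i" "\<And>i. P i (d i)" using assms(1) by metis
  have pos: "0 < Min (range d)" using d(1) by (subst Min_gr_iff) auto
  have "P i (Min (range d))" for i
    by (rule assms(2)[OF d(2) pos]) (rule Min_le; simp)
  then show ?thesis using pos by blast
qed

lemma supnorm_ge: "\<bar>s i\<bar> \<le> supnorm s"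
  unfolding supnorm_def by (rule Max_ge) auto

lemma supnorm_nonneg: "0 \<le> supnorm s"
  using supnorm_ge[of s] abs_ge_zero order_trans by blast

lemma supnorm_less: "(\<And>i. \<bar>s i\<bar> < d) \<Longrightarrow> supnorm (s::'i::finite \<Rightarrow> real) < d"
  unfolding supnorm_def by (subst Max_less_iff) auto

lemma nonneg_neq_0_pos: "nonneg s \<Longrightarrow> s i \<noteq> 0 \<Longrightarrow> 0 < s i"
  unfolding nonneg_def by (simp add: less_le)

lemma exists_sum_le_card_mult:
  fixes s :: "'j::finite \<Rightarrow> real"
  shows "\<exists>j. (\<Sum>k\<in>UNIV. s k) \<le> real CARD('j) * s j"
proof -
  have "Max (range s) \<in> range s" by (rule Max_in) auto
  then obtain j where j: "Max (range s) = s j" by (metis rangeE)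
  have "(\<Sum>k\<in>UNIV. s k) \<le> of_nat (card (UNIV :: 'j set)) * s j"
    using Max_ge[of "range s"] j by (intro sum_bounded_above) auto
  then show ?thesis by auto
qed

section \<open>Class \<open>\<K>\<^sub>\<infinity>\<close>\<close>

lemma Kinf_D:
  assumes "Kinf g"
  shows "continuous_on {0..} g" "g 0 = 0" "\<And>x y. 0 \<le> x \<Longrightarrow> x < y \<Longrightarrow> g x < g y"
    "\<And>M. \<exists>r\<ge>0. M \<le> g r"
  using assms unfolding Kinf_def strict_mono_on_def monotone_on_def by auto

lemma Kinf_less: "Kinf g \<Longrightarrow> 0 \<le> x \<Longrightarrow> x < y \<Longrightarrow> g x < g y"
  using Kinf_D(3) by blast

lemma Kinf_mono: "Kinf g \<Longrightarrow> 0 \<le> x \<Longrightarrow> x \<le> y \<Longrightarrow> g x \<le> g y"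
  using Kinf_less[of g x y] by (cases "x = y") auto

lemma Kinf_nonneg: "Kinf g \<Longrightarrow> 0 \<le> x \<Longrightarrow> 0 \<le> g x"
  using Kinf_mono[of g 0 x] Kinf_D(2)[of g] by auto

lemma Kinf_pos: "Kinf g \<Longrightarrow> 0 < x \<Longrightarrow> 0 < g x"
  using Kinf_less[of g 0 x] Kinf_D(2)[of g] by auto

lemma Kinf_eq_0_iff: "Kinf g \<Longrightarrow> 0 \<le> x \<Longrightarrow> g x = 0 \<longleftrightarrow> x = 0"
  using Kinf_pos[of g x] Kinf_D(2)[of g] by fastforce

lemma Kinf_cmult: "Kinf g \<Longrightarrow> 0 < c \<Longrightarrow> Kinf (\<lambda>x. c * g x)"
proof -
  assume g: "Kinf g" and c: "0 < c"
  have "\<exists>r\<ge>0. M \<le> c * g r" for M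
  proof -
    obtain r where "r \<ge> 0" "M / c \<le> g r" using Kinf_D(4)[OF g] by blast
    then show ?thesis using c by (intro exI[of _ r]) (auto simp: field_simps)
  qed
  moreover have "continuous_on {0..} (\<lambda>x. c * g x)"
    using Kinf_D(1)[OF g] by (intro continuous_intros)
  ultimately show ?thesis
    using Kinf_D(2)[OF g] Kinf_less[OF g] c
    by (auto simp: Kinf_def strict_mono_on_def monotone_on_def)
qed

lemma Kinf_surj:
  assumes "Kinf g" "0 \<le> y"
  shows "\<exists>x\<ge>0. g x = y"
proof -
  obtain R where R: "R \<ge> 0" "y \<le> g R" using Kinf_D(4)[OF assms(1)] by blast
  have "continuous_on {0..R} g"
    using Kinf_D(1)[OF assms(1)] by (rule continuous_on_subset) auto
  then show ?thesis
    using IVT'[of g 0 y R] R assms Kinf_D(2)[OF assms(1)] by auto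
qed

lemma Kinf_inj_on: "Kinf g \<Longrightarrow> inj_on g {0..}"
  unfolding Kinf_def by (auto intro: strict_mono_on_imp_inj_on)

lemma Kinf_inv_into:
  assumes g: "Kinf g" and y: "0 \<le> y"
  shows "0 \<le> the_inv_into {0..} g y" "g (the_inv_into {0..} g y) = y"
proof -
  have "y \<in> g ` {0..}" using Kinf_surj[OF g y] by auto
  then show "0 \<le> the_inv_into {0..} g y" "g (the_inv_into {0..} g y) = y"
    using the_inv_into_into[OF Kinf_inj_on[OF g], of y "{0..}"] f_the_inv_into_f[OF Kinf_inj_on[OF g]]
    by auto
qed

lemma Kinf_inv_into_f: "Kinf g \<Longrightarrow> 0 \<le> x \<Longrightarrow> the_inv_into {0..} g (g x) = x"
  using the_inv_into_f_f[OF Kinf_inj_on] by simp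

lemma Kinf_inv_into_mono:
  assumes g: "Kinf g" and y: "0 \<le> y1" "y1 \<le> y2"
  shows "the_inv_into {0..} g y1 \<le> the_inv_into {0..} g y2"
  using Kinf_less[OF g Kinf_inv_into(1)[OF g, of y2], of "the_inv_into {0..} g y1"]
    Kinf_inv_into(2)[OF g, of y1] Kinf_inv_into(2)[OF g, of y2] y
  by force

lemma Kinf_inv_into_pos:
  assumes g: "Kinf g" and y: "0 < y"
  shows "0 < the_inv_into {0..} g y"
  using Kinf_inv_into[OF g, of y] Kinf_D(2)[OF g] y by (metis less_eq_real_def less_irrefl)

lemma Kinf_sum:
  fixes g :: "'i::finite \<Rightarrow> real \<Rightarrow> real"
  assumes g: "\<And>i. Kinf (g i)"
  shows "Kinf (\<lambda>r. \<Sum>i\<in>UNIV. g i r)"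
proof -
  have "\<exists>r\<ge>0. M \<le> (\<Sum>i\<in>UNIV. g i r)" for M
  proof -
    fix i0 :: 'i
    obtain r where r: "r \<ge> 0" "M \<le> g i0 r" using Kinf_D(4)[OF g] by blast
    have "g i0 r \<le> (\<Sum>i\<in>UNIV. g i r)"
      by (rule member_le_sum) (use Kinf_nonneg[OF g r(1)] in auto)
    then show ?thesis using r by (intro exI[of _ r]) auto
  qed
  moreover have "continuous_on {0..} (\<lambda>r. \<Sum>i\<in>UNIV. g i r)"
    by (intro continuous_on_sum) (use Kinf_D(1)[OF g] in auto)
  ultimately show ?thesis
    using Kinf_D(2)[OF g] Kinf_less[OF g]
    by (auto simp: Kinf_def strict_mono_on_def monotone_on_def intro!: sum_strict_mono)
qed

lemma continuous_on_Min_image: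
  fixes g :: "'i \<Rightarrow> 'a::topological_space \<Rightarrow> 'b::linorder_topology"
  assumes "finite A" "A \<noteq> {}" "\<And>i. i \<in> A \<Longrightarrow> continuous_on S (g i)"
  shows "continuous_on S (\<lambda>x. Min ((\<lambda>i. g i x) ` A))"
  using assms
proof (induction A rule: finite_ne_induct)
  case (insert i A)
  then show ?case by (simp add: continuous_on_min)
qed simp

lemma Kinf_Min:
  fixes g :: "'i::finite \<Rightarrow> real \<Rightarrow> real"
  assumes g: "\<And>i. Kinf (g i)"
  shows "Kinf (\<lambda>r. Min (range (\<lambda>i. g i r)))"
proof -
  have attained: "\<exists>i. Min (range (\<lambda>i. g i r)) = g i r" for r
  proof -
    have "Min (range (\<lambda>i. g i r)) \<in> range (\<lambda>i. g i r)" by (rule Min_in) auto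
    then show ?thesis by (metis rangeE)
  qed
  have "\<exists>r. \<forall>i. 0 \<le> r \<and> M \<le> g i r" for M
  proof (rule finite_uniform_bound)
    show "\<exists>r. 0 \<le> r \<and> M \<le> g i r" for i using Kinf_D(4)[OF g] by blast
    show "0 \<le> r' \<and> M \<le> g i r'" if "0 \<le> r \<and> M \<le> g i r" "r \<le> r'" for i r r'
      using that Kinf_mono[OF g, of r r' i] by auto
  qed
  then have "\<exists>r\<ge>0. M \<le> Min (range (\<lambda>i. g i r))" for M
    using attained by metis
  moreover have "Min (range (\<lambda>i. g i r)) < Min (range (\<lambda>i. g i r'))" if "0 \<le> r" "r < r'" for r r'
  proof -
    obtain j where j: "Min (range (\<lambda>i. g i r')) = g j r'" using attained by blast
    have "Min (range (\<lambda>i. g i r)) \<le> g j r" by (rule Min_le) auto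
    then show ?thesis using j Kinf_less[OF g that, of j] by linarith
  qed
  moreover have "continuous_on {0..} (\<lambda>r. Min (range (\<lambda>i. g i r)))"
    by (rule continuous_on_Min_image) (use Kinf_D(1)[OF g] in auto)
  ultimately show ?thesis
    using attained[of 0] Kinf_D(2)[OF g]
    by (auto simp: Kinf_def strict_mono_on_def monotone_on_def)
qed

lemma Kinf_family_touching_above:
  fixes \<sigma> :: "real \<Rightarrow> 'i::finite \<Rightarrow> real"
  assumes \<sigma>: "\<And>i. Kinf (\<lambda>r. \<sigma> r i)" and s: "nonneg s"
  shows "\<exists>R\<ge>0. (\<forall>i. s i \<le> \<sigma> R i) \<and> (\<exists>k. \<sigma> R k = s k)"
proof -
  have "\<forall>i. \<exists>r. 0 \<le> r \<and> \<sigma> r i = s i" using Kinf_surj[OF \<sigma>] s unfolding nonneg_def by blast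
  from choice[OF this] obtain r where r: "\<And>i. 0 \<le> r i \<and> \<sigma> (r i) i = s i" by blast
  have "Max (range r) \<in> range r" by (rule Max_in) auto
  then obtain k where k: "r k = Max (range r)" by (metis rangeE)
  have "\<sigma> (r i) i \<le> \<sigma> (r k) i" for i
    using Kinf_mono[OF \<sigma>, of "r i" "r k" i] r k by simp
  then show ?thesis using r by (intro exI[of _ "r k"]) auto
qed

section \<open>Slope bounds\<close>

definition slope_bounded :: "(real \<Rightarrow> real) \<Rightarrow> real \<Rightarrow> real \<Rightarrow> real \<Rightarrow> real \<Rightarrow> bool" where
  "slope_bounded f a b c C \<longleftrightarrow>
     (\<forall>x y. a \<le> x \<longrightarrow> x \<le> y \<longrightarrow> y \<le> b \<longrightarrow> c * (y - x) \<le> f y - f x \<and> f y - f x \<le> C * (y - x))"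

lemma slope_boundedD:
  "slope_bounded f a b c C \<Longrightarrow> a \<le> x \<Longrightarrow> x \<le> y \<Longrightarrow> y \<le> b \<Longrightarrow>
     c * (y - x) \<le> f y - f x \<and> f y - f x \<le> C * (y - x)"
  unfolding slope_bounded_def by blast

lemma slope_bounded_abs:
  assumes f: "slope_bounded f a b c C" and c: "0 \<le> c"
    and xy: "a \<le> x" "x \<le> b" "a \<le> y" "y \<le> b"
  shows "c * \<bar>y - x\<bar> \<le> \<bar>f y - f x\<bar> \<and> \<bar>f y - f x\<bar> \<le> C * \<bar>y - x\<bar>"
proof (cases "x \<le> y")
  case True
  have "0 \<le> c * (y - x)" using c True by simp
  with slope_boundedD[OF f xy(1) True xy(4)] True show ?thesis by simp
next
  case False
  have "0 \<le> c * (x - y)" using c False by simp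
  with slope_boundedD[OF f xy(3) _ xy(2)] False show ?thesis by (simp add: abs_minus_commute)
qed

lemma slope_bounded_mono:
  assumes "slope_bounded f a b c C" "a \<le> a'" "b' \<le> b" "c' \<le> c" "C \<le> C'"
  shows "slope_bounded f a' b' c' C'"
  unfolding slope_bounded_def
proof (intro allI impI)
  fix x y assume xy: "a' \<le> x" "x \<le> y" "y \<le> b'"
  have "c' * (y - x) \<le> c * (y - x)" "C * (y - x) \<le> C' * (y - x)"
    using xy assms by (auto intro: mult_right_mono)
  with slope_boundedD[OF assms(1), of x y] xy assms(2,3)
  show "c' * (y - x) \<le> f y - f x \<and> f y - f x \<le> C' * (y - x)" by auto
qed

lemma slope_bounded_cong:
  assumes "slope_bounded f a b c C" "\<And>x. a \<le> x \<Longrightarrow> x \<le> b \<Longrightarrow> f x = g x"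
  shows "slope_bounded g a b c C"
  unfolding slope_bounded_def
proof (intro allI impI)
  fix x y assume xy: "a \<le> x" "x \<le> y" "y \<le> b"
  with slope_boundedD[OF assms(1) xy] assms(2)[of x] assms(2)[of y]
  show "c * (y - x) \<le> g y - g x \<and> g y - g x \<le> C * (y - x)" by simp
qed

lemma slope_bounded_join:
  assumes f: "slope_bounded f a m c C" "slope_bounded f m b c C" and m: "a \<le> m" "m \<le> b"
  shows "slope_bounded f a b c C"
  unfolding slope_bounded_def
proof (intro allI impI)
  fix x y assume xy: "a \<le> x" "x \<le> y" "y \<le> b"
  show "c * (y - x) \<le> f y - f x \<and> f y - f x \<le> C * (y - x)"
  proof (cases "y \<le> m")
    case True then show ?thesis using slope_boundedD[OF f(1)] xy by blast
  next
    case y: False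
    show ?thesis
    proof (cases "m \<le> x")
      case True then show ?thesis using slope_boundedD[OF f(2)] xy by blast
    next
      case False
      have "c * (m - x) \<le> f m - f x \<and> f m - f x \<le> C * (m - x)"
        "c * (y - m) \<le> f y - f m \<and> f y - f m \<le> C * (y - m)"
        using slope_boundedD[OF f(1), of x m] slope_boundedD[OF f(2), of m y] xy y False by auto
      then show ?thesis by (simp add: algebra_simps)
    qed
  qed
qed

lemma slope_bounded_continuous_on:
  assumes "slope_bounded f a b c C" "0 \<le> c"
  shows "continuous_on {a..b} f"
proof (rule lipschitz_on_continuous_on)
  show "\<bar>C\<bar>-lipschitz_on {a..b} f"
  proof (rule lipschitz_onI)
    fix x y assume "x \<in> {a..b}" "y \<in> {a..b}"
    then have "\<bar>f x - f y\<bar> \<le> C * \<bar>x - y\<bar>" using slope_bounded_abs[OF assms] by auto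
    also have "\<dots> \<le> \<bar>C\<bar> * \<bar>x - y\<bar>" by (simp add: mult_right_mono)
    finally show "dist (f x) (f y) \<le> \<bar>C\<bar> * dist x y" by (simp add: dist_real_def)
  qed simp
qed

lemma Kinf_if_slope_bounded:
  assumes f0: "f 0 = 0" and nonneg: "\<And>r. 0 \<le> r \<Longrightarrow> 0 \<le> f r"
    and cont0: "continuous (at 0 within {0..}) f"
    and slopes: "\<And>a b. 0 < a \<Longrightarrow> a \<le> b \<Longrightarrow> \<exists>c>0. \<exists>C. slope_bounded f a b c C"
    and unbounded: "\<And>M. \<exists>r\<ge>0. M \<le> f r"
  shows "Kinf f"
proof -
  have less: "f x < f y" if "0 \<le> x" "x < y" for x y
  proof -
    define a where "a = (if x = 0 then y / 2 else x)"
    have a: "0 < a" "x \<le> a" "a < y" using that unfolding a_def by auto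
    obtain c C where c: "0 < c" "slope_bounded f a y c C" using slopes[OF a(1) less_imp_le[OF a(3)]] by blast
    have "0 < c * (y - a)" using c(1) a(3) by simp
    then have "f a < f y" using slope_boundedD[OF c(2), of a y] a(3) by linarith
    moreover have "f x \<le> f a" using f0 nonneg[of a] a unfolding a_def by (cases "x = 0") auto
    ultimately show ?thesis by linarith
  qed
  have "continuous (at x within {0..}) f" if x: "0 \<le> x" for x
  proof (cases "x = 0")
    case False
    have "0 < x / 2" "x / 2 \<le> x + 1" using x False by auto
    then obtain c C where "0 < c" "slope_bounded f (x / 2) (x + 1) c C" using slopes by blast
    then have "continuous_on {x / 2..x + 1} f" by (intro slope_bounded_continuous_on) auto
    moreover have "x \<in> interior {x / 2..x + 1}" using x False by simp
    ultimately show ?thesis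
      using continuous_on_interior continuous_at_imp_continuous_within by blast
  qed (use cont0 in simp)
  then have "continuous_on {0..} f" by (simp add: continuous_on_eq_continuous_within)
  then show ?thesis using f0 less unbounded by (auto simp: Kinf_def strict_mono_on_def monotone_on_def)
qed

lemma inv_into_slope_bounded:
  assumes g: "Kinf g" and s: "slope_bounded g a b c C" and c: "0 < c" and a: "0 \<le> a" "a \<le> b"
  shows "slope_bounded (the_inv_into {0..} g) (g a) (g b) (1 / C) (1 / c)"
  unfolding slope_bounded_def
proof (intro allI impI)
  fix x y assume xy: "g a \<le> x" "x \<le> y" "y \<le> g b"
  define u v where "u = the_inv_into {0..} g x" and "v = the_inv_into {0..} g y"
  have x0: "0 \<le> x" using Kinf_nonneg[OF g a(1)] xy by linarith
  have uv: "a \<le> u" "u \<le> v" "v \<le> b"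
    using Kinf_inv_into_mono[OF g Kinf_nonneg[OF g a(1)] xy(1)] Kinf_inv_into_mono[OF g x0 xy(2)]
      Kinf_inv_into_mono[OF g _ xy(3)] Kinf_inv_into_f[OF g a(1)] Kinf_inv_into_f[OF g, of b] a x0 xy(2)
    unfolding u_def v_def by auto
  have gu: "g u = x" "g v = y" unfolding u_def v_def using Kinf_inv_into(2)[OF g] x0 xy by auto
  have bounds: "c * (v - u) \<le> y - x" "y - x \<le> C * (v - u)"
    using slope_boundedD[OF s uv] gu by auto
  show "1 / C * (y - x) \<le> v - u \<and> v - u \<le> 1 / c * (y - x)"
  proof (cases "u = v")
    case True then show ?thesis using gu by simp
  next
    case False
    have "c * (v - u) \<le> C * (v - u)" using bounds by linarith
    moreover have "0 < v - u" using uv False by simp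
    ultimately have "0 < C" using c mult_right_le_imp_le by fastforce
    then show ?thesis using bounds c by (simp add: field_simps)
  qed
qed


lemma inv_into_slope_bounded_between:
  assumes g: "Kinf g" and slopes: "\<And>a b. 0 < a \<Longrightarrow> a \<le> b \<Longrightarrow> \<exists>c>0. \<exists>C. slope_bounded g a b c C"
    and lo: "0 < lo" "lo \<le> hi"
  shows "\<exists>l>0. \<exists>L. slope_bounded (the_inv_into {0..} g) lo hi l L"
proof -
  define a b where "a = the_inv_into {0..} g lo" and "b = the_inv_into {0..} g hi"
  have ab: "0 < a" "a \<le> b"
    using Kinf_inv_into_pos[OF g lo(1)] Kinf_inv_into_mono[OF g _ lo(2)] lo(1) unfolding a_def b_def by auto
  obtain c C where c: "0 < c" "slope_bounded g a b c C" using slopes[OF ab] by blast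
  have "slope_bounded g a b c (max C c)" by (rule slope_bounded_mono[OF c(2)]) auto
  then have "slope_bounded (the_inv_into {0..} g) (g a) (g b) (1 / max C c) (1 / c)"
    using inv_into_slope_bounded[OF g _ c(1)] ab by simp
  moreover have "g a = lo" "g b = hi" using Kinf_inv_into(2)[OF g] lo unfolding a_def b_def by auto
  moreover have "0 < 1 / max C c" using c(1) by simp
  ultimately show ?thesis by metis
qed

lemma inv_into_bilipschitz_on_compact:
  fixes g :: "'i::finite \<Rightarrow> real \<Rightarrow> real"
  assumes g: "\<And>i. Kinf (g i)"
    and slopes: "\<And>i a b. 0 < a \<Longrightarrow> a \<le> b \<Longrightarrow> \<exists>c>0. \<exists>C. slope_bounded (g i) a b c C"
    and K: "compact K" "K \<subseteq> {0<..}"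
  shows "\<exists>l L. 0 < l \<and> l \<le> L \<and> (\<forall>r1\<in>K. \<forall>r2\<in>K. \<forall>i.
           l * \<bar>r1 - r2\<bar> \<le> \<bar>the_inv_into {0..} (g i) r1 - the_inv_into {0..} (g i) r2\<bar>
         \<and> \<bar>the_inv_into {0..} (g i) r1 - the_inv_into {0..} (g i) r2\<bar> \<le> L * \<bar>r1 - r2\<bar>)"
proof (cases "K = {}")
  case True
  then show ?thesis by (intro exI[of _ 1]) auto
next
  case False
  obtain lo hi where lo: "lo \<in> K" "\<And>r. r \<in> K \<Longrightarrow> lo \<le> r" and hi: "\<And>r. r \<in> K \<Longrightarrow> r \<le> hi"
    using compact_attains_inf[OF K(1) False] compact_attains_sup[OF K(1) False] by metis
  have lo0: "0 < lo" and lohi: "lo \<le> hi" using lo hi K(2) by auto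
  let ?inv = "\<lambda>i. the_inv_into {0..} (g i)"
  obtain l where l: "0 < l" "\<And>i. \<exists>L. slope_bounded (?inv i) lo hi l L"
  proof (atomize_elim, rule finite_uniform_pos)
    show "\<exists>l>0. \<exists>L. slope_bounded (?inv i) lo hi l L" for i
      by (rule inv_into_slope_bounded_between[OF g slopes lo0 lohi])
    show "\<exists>L. slope_bounded (?inv i) lo hi l' L" if "\<exists>L. slope_bounded (?inv i) lo hi l L" "l' \<le> l"
      for i l l'
      using that slope_bounded_mono[OF _ order_refl order_refl that(2) order_refl] by blast
  qed
  obtain L where L: "\<And>i. slope_bounded (?inv i) lo hi l L"
  proof (atomize_elim, rule finite_uniform_bound)
    show "\<exists>L. slope_bounded (?inv i) lo hi l L" for i by (rule l(2))
    show "slope_bounded (?inv i) lo hi l L'" if "slope_bounded (?inv i) lo hi l L" "L \<le> L'" for i L L'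
      by (rule slope_bounded_mono[OF that(1) order_refl order_refl order_refl that(2)])
  qed
  have "slope_bounded (?inv i) lo hi l (max l L)" for i by (rule slope_bounded_mono[OF L]) auto
  then show ?thesis
    using slope_bounded_abs[of "?inv _" lo hi l "max l L"] l(1) lo hi
    by (intro exI[of _ l] exI[of _ "max l L"]) (auto simp: abs_minus_commute)
qed

section \<open>Piecewise-linear interpolation\<close>

definition interp :: "(nat \<Rightarrow> real) \<Rightarrow> (nat \<Rightarrow> 'i \<Rightarrow> real) \<Rightarrow> real \<Rightarrow> 'i \<Rightarrow> real" where
  "interp t z r = (if r \<le> 0 then (\<lambda>_. 0) else (let j = (LEAST j. t (Suc j) < r) in
     (\<lambda>i. z (Suc j) i + (r - t (Suc j)) / (t j - t (Suc j)) * (z j i - z (Suc j) i))))"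

locale descending_knots =
  fixes t :: "nat \<Rightarrow> real" and z :: "nat \<Rightarrow> 'i::finite \<Rightarrow> real"
  assumes knots_decreasing: "\<And>j. t (Suc j) < t j" and knots_pos: "\<And>j. 0 < t j"
    and knots_tendsto_0: "t \<longlonglongrightarrow> 0"
    and values_decreasing: "\<And>j i. z (Suc j) i \<le> z j i" and values_nonneg: "\<And>j i. 0 \<le> z j i"
begin

lemma knots_antimono: "m \<le> n \<Longrightarrow> t n \<le> t m"
  using lift_Suc_antimono_le[of t m n] knots_decreasing less_imp_le by blast

lemma values_antimono: "m \<le> n \<Longrightarrow> z n i \<le> z m i"
  using lift_Suc_antimono_le[of "\<lambda>j. z j i" m n] values_decreasing by blast

lemma knot_less: "0 < r \<Longrightarrow> \<exists>j. t j < r"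
  using order_tendstoD(2)[OF knots_tendsto_0] by (metis eventually_sequentially order_refl)

lemma interp_eq:
  assumes "t (Suc j) < r" "r \<le> t j"
  shows "interp t z r = (\<lambda>i. z (Suc j) i + (r - t (Suc j)) / (t j - t (Suc j)) * (z j i - z (Suc j) i))"
proof -
  have "(LEAST j. t (Suc j) < r) = j"
  proof (rule Least_equality)
    show "t (Suc j) < r" by fact
    show "j \<le> k" if "t (Suc k) < r" for k
      using knots_antimono[of "Suc k" j] that assms(2) by (meson not_less_eq_eq not_le order_trans)
  qed
  moreover have "0 < r" using assms knots_pos[of "Suc j"] by linarith
  ultimately show ?thesis unfolding interp_def by (simp add: Let_def)
qed

lemma interp_segment: "0 < r \<Longrightarrow> r \<le> t 0 \<Longrightarrow> \<exists>j. t (Suc j) < r \<and> r \<le> t j"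
proof -
  assume r: "0 < r" "r \<le> t 0"
  obtain j0 where "t j0 < r" using knot_less[OF r(1)] by blast
  then have ex: "\<exists>j. t (Suc j) < r" using knots_decreasing[of j0] by (meson order.strict_trans)
  define j where "j = (LEAST j. t (Suc j) < r)"
  have "t (Suc j) < r" unfolding j_def by (rule LeastI_ex[OF ex])
  moreover have "r \<le> t j"
  proof (cases j)
    case (Suc j')
    then have "\<not> t (Suc j') < r" using Least_le[of "\<lambda>j. t (Suc j) < r" j'] unfolding j_def by fastforce
    then show ?thesis using Suc by simp
  qed (use r in simp)
  ultimately show ?thesis by blast
qed

lemma interp_eq_closed:
  assumes "t (Suc j) \<le> r" "r \<le> t j"
  shows "interp t z r i = z (Suc j) i + (r - t (Suc j)) / (t j - t (Suc j)) * (z j i - z (Suc j) i)"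
proof (cases "r = t (Suc j)")
  case True
  then have "interp t z r i = z (Suc j) i"
    using interp_eq[of "Suc j" r] knots_decreasing[of "Suc j"] by simp
  then show ?thesis using True by simp
qed (use interp_eq[of j r] assms in simp)

lemma interp_knot: "interp t z (t j) i = z j i"
  using interp_eq_closed[of j "t j" i] knots_decreasing[of j] by simp

lemma interp_between:
  assumes "t (Suc j) \<le> r" "r \<le> t j"
  shows "z (Suc j) i \<le> interp t z r i \<and> interp t z r i \<le> z j i"
proof -
  define l where "l = (r - t (Suc j)) / (t j - t (Suc j))"
  have l: "0 \<le> l" "l \<le> 1" unfolding l_def using assms knots_decreasing[of j] by (auto simp: field_simps)
  have "0 \<le> z j i - z (Suc j) i" using values_decreasing by simp
  moreover have "interp t z r i = z (Suc j) i + l * (z j i - z (Suc j) i)"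
    unfolding l_def by (rule interp_eq_closed[OF assms])
  ultimately show ?thesis using l mult_left_le_one_le[of "z j i - z (Suc j) i" l] by simp
qed

lemma interp_nonneg:
  assumes "r \<le> t 0"
  shows "0 \<le> interp t z r i"
proof (cases "r \<le> 0")
  case False
  then have "0 < r" by simp
  then obtain j where "t (Suc j) < r" "r \<le> t j" using interp_segment assms by blast
  then show ?thesis using interp_between[of j r i] values_nonneg[of "Suc j" i] by auto
qed (simp add: interp_def)

lemma interp_mono:
  assumes "0 \<le> r" "r \<le> r'" "r' \<le> t 0"
  shows "interp t z r i \<le> interp t z r' i"
proof (cases "r \<le> 0")
  case True
  then show ?thesis using interp_nonneg[of r' i] assms unfolding interp_def by simp
next
  case False
  obtain j where j: "t (Suc j) < r" "r \<le> t j" using interp_segment[of r] False assms by auto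
  obtain j' where j': "t (Suc j') < r'" "r' \<le> t j'" using interp_segment[of r'] False assms by auto
  show ?thesis
  proof (cases "j = j'")
    case True
    with j' have j'': "t (Suc j) < r'" "r' \<le> t j" by auto
    have "(r - t (Suc j)) / (t j - t (Suc j)) \<le> (r' - t (Suc j)) / (t j - t (Suc j))"
      using assms knots_decreasing[of j] by (intro divide_right_mono) auto
    then have "(r - t (Suc j)) / (t j - t (Suc j)) * (z j i - z (Suc j) i)
        \<le> (r' - t (Suc j)) / (t j - t (Suc j)) * (z j i - z (Suc j) i)"
      by (rule mult_right_mono) (use values_decreasing[of j i] in simp)
    then show ?thesis unfolding interp_eq[OF j] interp_eq[OF j''] by simp
  next
    case False
    have "\<not> j \<le> j'"
    proof
      assume "j \<le> j'"
      then have "t j' \<le> t (Suc j)" using False knots_antimono[of "Suc j" j'] by simp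
      then show False using j j' assms by linarith
    qed
    then have "z j i \<le> z (Suc j') i" using values_antimono[of "Suc j'" j i] by simp
    moreover have "interp t z r i \<le> z j i" "z (Suc j') i \<le> interp t z r' i"
      using interp_between[of j r i] interp_between[of j' r' i] j j' by auto
    ultimately show ?thesis by linarith
  qed
qed

lemma interp_le_value: "0 \<le> r \<Longrightarrow> r \<le> t j \<Longrightarrow> interp t z r i \<le> z j i"
  using interp_mono[of r "t j" i] interp_knot[of j i] knots_antimono[of 0 j] by auto

lemma interp_sum:
  assumes sums: "\<And>j. t j = (\<Sum>i\<in>UNIV. z j i)" and r: "0 \<le> r" "r \<le> t 0"
  shows "(\<Sum>i\<in>UNIV. interp t z r i) = r"
proof (cases "r = 0")
  case False
  obtain j where j: "t (Suc j) < r" "r \<le> t j" using interp_segment[of r] False r by auto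
  define l where "l = (r - t (Suc j)) / (t j - t (Suc j))"
  have "(\<Sum>i\<in>UNIV. interp t z r i) = (\<Sum>i\<in>UNIV. z (Suc j) i + l * (z j i - z (Suc j) i))"
    unfolding interp_eq[OF j] l_def by simp
  also have "\<dots> = t (Suc j) + l * (t j - t (Suc j))"
    unfolding sums by (simp add: sum.distrib sum_distrib_left[symmetric] sum_subtractf)
  also have "\<dots> = r" unfolding l_def using knots_decreasing[of j] by (simp add: field_simps)
  finally show ?thesis .
qed (simp add: interp_def)

definition segment_slope :: "nat \<Rightarrow> 'i \<Rightarrow> real" where
  "segment_slope j i = (z j i - z (Suc j) i) / (t j - t (Suc j))"

lemma interp_slope_bounded_segment:
  assumes "c \<le> segment_slope j i" "segment_slope j i \<le> C"
  shows "slope_bounded (\<lambda>r. interp t z r i) (t (Suc j)) (t j) c C"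
  unfolding slope_bounded_def
proof (intro allI impI)
  fix x y assume xy: "t (Suc j) \<le> x" "x \<le> y" "y \<le> t j"
  have "interp t z y i - interp t z x i = segment_slope j i * (y - x)"
    using interp_eq_closed[of j x i] interp_eq_closed[of j y i] xy knots_decreasing[of j]
    unfolding segment_slope_def by (simp add: field_simps)
  then show "c * (y - x) \<le> interp t z y i - interp t z x i \<and> interp t z y i - interp t z x i \<le> C * (y - x)"
    using assms xy by (auto intro: mult_right_mono)
qed

lemma interp_slope_bounded:
  assumes "\<And>j. j \<le> J \<Longrightarrow> c \<le> segment_slope j i \<and> segment_slope j i \<le> C"
  shows "slope_bounded (\<lambda>r. interp t z r i) (t (Suc J)) (t 0) c C"
  using assms
proof (induction J)
  case 0
  then show ?case using interp_slope_bounded_segment[of c 0 i C] by simp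
next
  case (Suc J)
  then have "slope_bounded (\<lambda>r. interp t z r i) (t (Suc (Suc J))) (t (Suc J)) c C"
    by (intro interp_slope_bounded_segment) auto
  then show ?case
    by (rule slope_bounded_join[OF _ Suc.IH])
      (use Suc.prems knots_decreasing knots_antimono in \<open>auto intro: less_imp_le\<close>)
qed

end

section \<open>Continuity on the orthant and Brouwer's theorem\<close>

definition orthant_continuous :: "(('i \<Rightarrow> real) \<Rightarrow> 'i \<Rightarrow> real) \<Rightarrow> bool" where
  "orthant_continuous F \<longleftrightarrow> (\<forall>s0 i e. nonneg s0 \<longrightarrow> 0 < e \<longrightarrow>
     (\<exists>d>0. \<forall>s. nonneg s \<and> (\<forall>k. \<bar>s k - s0 k\<bar> < d) \<longrightarrow> \<bar>F s i - F s0 i\<bar> < e))"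

lemma orthant_continuousD:
  "orthant_continuous F \<Longrightarrow> nonneg s0 \<Longrightarrow> 0 < e \<Longrightarrow>
     \<exists>d>0. \<forall>s. nonneg s \<and> (\<forall>k. \<bar>s k - s0 k\<bar> < d) \<longrightarrow> \<bar>F s i - F s0 i\<bar> < e"
  unfolding orthant_continuous_def by blast

lemma orthant_continuous_compose:
  fixes F :: "('i \<Rightarrow> real) \<Rightarrow> 'i \<Rightarrow> real"
  assumes F: "orthant_continuous F" and F_nonneg: "\<And>s i. nonneg s \<Longrightarrow> 0 \<le> F s i"
    and h: "continuous_on {0..} h"
  shows "orthant_continuous (\<lambda>s i. h (F s i))"
  unfolding orthant_continuous_def
proof (intro allI impI)
  fix s0 :: "'i \<Rightarrow> real" and i :: 'i and e :: real assume s0: "nonneg s0" and e: "0 < e"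
  obtain d1 where d1: "0 < d1" "\<And>y. 0 \<le> y \<Longrightarrow> \<bar>y - F s0 i\<bar> < d1 \<Longrightarrow> \<bar>h y - h (F s0 i)\<bar> < e"
    using h F_nonneg[OF s0, of i] e unfolding continuous_on_iff dist_real_def by (metis atLeast_iff)
  obtain d where "0 < d" "\<And>s. nonneg s \<and> (\<forall>k. \<bar>s k - s0 k\<bar> < d) \<Longrightarrow> \<bar>F s i - F s0 i\<bar> < d1"
    using orthant_continuousD[OF F s0 d1(1)] by blast
  then show "\<exists>d>0. \<forall>s. nonneg s \<and> (\<forall>k. \<bar>s k - s0 k\<bar> < d) \<longrightarrow> \<bar>h (F s i) - h (F s0 i)\<bar> < e"
    using d1(2) F_nonneg by blast
qed

lemma orthant_continuous_tendsto:
  fixes z :: "nat \<Rightarrow> 'i::finite \<Rightarrow> real"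
  assumes F: "orthant_continuous F" and lim: "\<And>k. (\<lambda>n. z n k) \<longlonglongrightarrow> L k"
    and nonneg: "nonneg L" "\<And>n. nonneg (z n)"
  shows "(\<lambda>n. F (z n) i) \<longlonglongrightarrow> F L i"
  unfolding tendsto_iff
proof (intro allI impI)
  fix e :: real assume "0 < e"
  then obtain d where d: "0 < d" "\<And>s. nonneg s \<and> (\<forall>k. \<bar>s k - L k\<bar> < d) \<Longrightarrow> \<bar>F s i - F L i\<bar> < e"
    using orthant_continuousD[OF F nonneg(1)] by blast
  have "eventually (\<lambda>n. \<forall>k. dist (z n k) (L k) < d) sequentially"
    using lim d(1) by (intro eventually_all_finite) (simp add: tendsto_iff)
  then show "eventually (\<lambda>n. dist (F (z n) i) (F L i) < e) sequentially"
    by eventually_elim (use d(2) nonneg(2) in \<open>auto simp: dist_real_def\<close>)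
qed

lemma orthant_continuous_imp_continuous_on:
  fixes F :: "('i::finite \<Rightarrow> real) \<Rightarrow> 'i \<Rightarrow> real"
  assumes F: "orthant_continuous F"
  shows "continuous_on {v::real^'i. \<forall>k. 0 \<le> v $ k} (\<lambda>v. F (($) v) i)"
  unfolding continuous_on_iff
proof (intro ballI allI impI)
  fix v e assume v: "v \<in> {v::real^'i. \<forall>k. 0 \<le> v $ k}" and e: "(0::real) < e"
  then have "nonneg (($) v)" by (simp add: nonneg_def)
  then obtain d where d: "0 < d" "\<And>s. nonneg s \<and> (\<forall>k. \<bar>s k - v $ k\<bar> < d) \<Longrightarrow> \<bar>F s i - F (($) v) i\<bar> < e"
    using orthant_continuousD[OF F _ e, of "($) v" i] by blast
  have "\<bar>w $ k - v $ k\<bar> < d" if "dist w v < d" for w k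
    using component_le_norm_cart[of "w - v" k] that by (simp add: dist_norm)
  then show "\<exists>d>0. \<forall>w\<in>{v::real^'i. \<forall>k. 0 \<le> v $ k}. dist w v < d \<longrightarrow> dist (F (($) w) i) (F (($) v) i) < e"
    using d by (auto simp: nonneg_def dist_real_def)
qed

lemma compact_convex_simplex:
  "compact {v::real^'i. (\<forall>i. 0 \<le> v $ i) \<and> (\<Sum>i\<in>UNIV. v $ i) = R}"
  "convex {v::real^'i. (\<forall>i. 0 \<le> v $ i) \<and> (\<Sum>i\<in>UNIV. v $ i) = R}"
proof -
  let ?S = "{v::real^'i. (\<forall>i. 0 \<le> v $ i) \<and> (\<Sum>i\<in>UNIV. v $ i) = R}"
  have "?S = {v. \<forall>i. 0 \<le> v $ i} \<inter> {v. (\<Sum>i\<in>UNIV. v $ i) = R}" by auto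
  moreover have "closed {v::real^'i. (\<Sum>i\<in>UNIV. v $ i) = R}"
    by (intro closed_Collect_eq continuous_intros)
  ultimately have "closed ?S" using closed_positive_orthant by auto
  moreover have "norm v \<le> R" if "v \<in> ?S" for v
    using norm_le_l1_cart[of v] that by auto
  ultimately show "compact ?S" unfolding compact_eq_bounded_closed bounded_iff by blast
  show "convex ?S"
  proof (rule convexI)
    fix x y :: "real^'i" and u v :: real
    assume xy: "x \<in> ?S" "y \<in> ?S" and uv: "0 \<le> u" "0 \<le> v" "u + v = 1"
    have "(\<Sum>i\<in>UNIV. (u *\<^sub>R x + v *\<^sub>R y) $ i) = u * (\<Sum>i\<in>UNIV. x $ i) + v * (\<Sum>i\<in>UNIV. y $ i)"
      by (simp add: sum.distrib sum_distrib_left)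
    also have "\<dots> = (u + v) * R" using xy by (simp add: algebra_simps)
    also have "\<dots> = R" using uv(3) by simp
    finally show "u *\<^sub>R x + v *\<^sub>R y \<in> ?S" using xy uv by auto
  qed
qed

lemma NJI_max_eq_scaled:
  assumes nji: "NJI F" and F_nonneg: "\<And>i. 0 \<le> F s i" and s: "nonneg s" "s \<noteq> (\<lambda>_. 0)"
    and eq: "\<And>k. max (F s k) (s k) = c * s k"
  shows "c \<le> 1"
proof (rule ccontr)
  assume "\<not> c \<le> 1"
  have "s k \<le> F s k" for k
  proof (cases "s k = 0")
    case False
    then have "0 < s k" using nonneg_neq_0_pos[OF s(1)] by blast
    then have "1 * s k < c * s k" using \<open>\<not> c \<le> 1\<close> by (intro mult_strict_right_mono) auto
    then have "s k < c * s k" by simp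
    then show ?thesis using eq[of k] by (auto simp: max_def split: if_splits)
  qed (use F_nonneg in simp)
  then show False using nji s unfolding NJI_def by blast
qed

text \<open>Brouwer's theorem applied to \<open>v \<mapsto> R \<cdot> m(v) / \<Sum>m(v)\<close> with \<open>m(v) = max (F v) v\<close> on the simplex
  of size \<open>R\<close>.\<close>

lemma simplex_max_eigenvector:
  fixes F :: "('i::finite \<Rightarrow> real) \<Rightarrow> 'i \<Rightarrow> real"
  assumes cont: "orthant_continuous F" and R: "0 < R"
  shows "\<exists>s c. nonneg s \<and> (\<Sum>i\<in>UNIV. s i) = R \<and> (\<forall>k. max (F s k) (s k) = c * s k)"
proof -
  define S where "S = {v::real^'i. (\<forall>i. 0 \<le> v $ i) \<and> (\<Sum>i\<in>UNIV. v $ i) = R}"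
  define m where "m v i = max (F (($) v) i) (v $ i)" for v :: "real^'i" and i
  define f where "f v = (\<chi> i. R * m v i / sum (m v) UNIV)" for v
  have m_ge: "v $ i \<le> m v i" for v i unfolding m_def by simp
  have sum_m: "R \<le> sum (m v) UNIV" if "v \<in> S" for v
    using sum_mono[of UNIV "\<lambda>i. v $ i" "m v"] m_ge that unfolding S_def by auto
  have "continuous_on S (\<lambda>v. m v i)" for i
    unfolding m_def S_def
    by (intro continuous_intros continuous_on_subset[OF orthant_continuous_imp_continuous_on[OF cont]]) auto
  then have "continuous_on S f"
    unfolding f_def using sum_m R by (intro continuous_on_vec_lambda continuous_intros) force+
  moreover have "f \<in> S \<rightarrow> S"
  proof
    fix v assume v: "v \<in> S"
    have "0 \<le> v $ i" for i using v unfolding S_def by blast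
    then have "0 \<le> m v i" for i using m_ge[of v i] by (rule order_trans)
    then show "f v \<in> S"
      using sum_m[OF v] R unfolding f_def S_def
      by (auto simp: sum_divide_distrib[symmetric] sum_distrib_left[symmetric])
  qed
  moreover have "(\<chi> i. R / real CARD('i)) \<in> S" unfolding S_def using R by auto
  ultimately obtain v where v: "v \<in> S" "f v = v"
    using brouwer[of S f] compact_convex_simplex unfolding S_def by blast
  have "max (F (($) v) k) (v $ k) = sum (m v) UNIV / R * v $ k" for k
    using arg_cong[OF v(2), of "\<lambda>w. w $ k"] sum_m[OF v(1)] R unfolding f_def m_def
    by (auto simp: field_simps)
  moreover have "nonneg (($) v)" "(\<Sum>i\<in>UNIV. v $ i) = R" using v(1) unfolding S_def nonneg_def by auto
  ultimately show ?thesis by blast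
qed

lemma NJI_decay_point_on_simplex:
  fixes F :: "('i::finite \<Rightarrow> real) \<Rightarrow> 'i \<Rightarrow> real"
  assumes cont: "orthant_continuous F" and F_nonneg: "\<And>s i. nonneg s \<Longrightarrow> 0 \<le> F s i"
    and nji: "NJI F" and R: "0 < R"
  shows "\<exists>s. nonneg s \<and> (\<Sum>i\<in>UNIV. s i) = R \<and> (\<forall>i. F s i \<le> s i)"
proof -
  obtain s c where s: "nonneg s" "(\<Sum>i\<in>UNIV. s i) = R" and eq: "\<And>k. max (F s k) (s k) = c * s k"
    using simplex_max_eigenvector[OF cont R] by blast
  have "s \<noteq> (\<lambda>_. 0)" using s(2) R by auto
  then have "c \<le> 1" using NJI_max_eq_scaled[OF nji F_nonneg[OF s(1)] s(1)] eq by blast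
  then have "F s k \<le> s k" for k
    using eq[of k] mult_right_mono[of c 1 "s k"] s(1) unfolding nonneg_def by auto
  then show ?thesis using s by blast
qed

section \<open>Gain operators\<close>

locale gain_op =
  fixes Iset :: "'i::finite \<Rightarrow> 'i set" and gam :: "'i \<Rightarrow> 'i \<Rightarrow> real \<Rightarrow> real"
    and mu :: "'i \<Rightarrow> ('i \<Rightarrow> real) \<Rightarrow> ennreal"
  assumes gain_operator: "gain_operator Iset gam mu"
begin

abbreviation G :: "('i \<Rightarrow> real) \<Rightarrow> 'i \<Rightarrow> real" where
  "G \<equiv> Gam Iset gam mu"

definition gains :: "('i \<Rightarrow> real) \<Rightarrow> 'i \<Rightarrow> 'i \<Rightarrow> real" where
  "gains s i = (\<lambda>j. if j \<in> Iset i then gam i j (s j) else 0)"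

lemma G_eq: "G s i = enn2real (mu i (gains s i))"
  unfolding Gam_def gains_def by simp

lemma gam_Kinf: "j \<in> Iset i \<Longrightarrow> Kinf (gam i j)"
  using gain_operator[unfolded gain_operator_def, THEN conjunct2, THEN conjunct1] by blast

lemma mu_lower_bound:
  "\<exists>\<xi>. Kinf \<xi> \<and> (\<forall>i. mu i (\<lambda>_. 0) = 0 \<and> (\<forall>s. nonneg s \<longrightarrow> ennreal (\<xi> (supnorm s)) \<le> mu i s))"
  using gain_operator[unfolded gain_operator_def, THEN conjunct2, THEN conjunct2, THEN conjunct2,
      THEN conjunct1] .

lemma mu_zero: "mu i (\<lambda>_. 0) = 0"
  using mu_lower_bound by blast

lemma mu_mono: "nonneg s \<Longrightarrow> nonneg t \<Longrightarrow> (\<And>k. s k \<le> t k) \<Longrightarrow> mu i s \<le> mu i t"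
  using gain_operator[unfolded gain_operator_def, THEN conjunct2, THEN conjunct2, THEN conjunct2,
      THEN conjunct2, THEN conjunct1]
  by blast

lemma mu_finite_continuous:
  "nonneg s \<Longrightarrow> mu i s < \<infinity>"
  "nonneg s0 \<Longrightarrow> 0 < e \<Longrightarrow> \<exists>d>0. \<forall>s. nonneg s \<and> supnorm (\<lambda>k. s k - s0 k) < d \<longrightarrow>
     \<bar>enn2real (mu i s) - enn2real (mu i s0)\<bar> < e"
proof -
  have "(\<forall>s. nonneg s \<and> (\<forall>k. k \<notin> UNIV \<longrightarrow> s k = 0) \<longrightarrow> mu i s < \<infinity>)
    \<and> (\<forall>s0. nonneg s0 \<and> (\<forall>k. k \<notin> UNIV \<longrightarrow> s0 k = 0) \<longrightarrow>
         (\<forall>\<epsilon>>0. \<exists>\<delta>>0. \<forall>s. nonneg s \<and> (\<forall>k. k \<notin> UNIV \<longrightarrow> s k = 0)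
           \<and> supnorm (\<lambda>k. s k - s0 k) < \<delta> \<longrightarrow> \<bar>enn2real (mu i s) - enn2real (mu i s0)\<bar> < \<epsilon>))"
    using gain_operator[unfolded gain_operator_def, THEN conjunct2, THEN conjunct2, THEN conjunct2,
        THEN conjunct2, THEN conjunct2, THEN conjunct1, rule_format, of UNIV i]
    by simp
  then show "nonneg s \<Longrightarrow> mu i s < \<infinity>"
    "nonneg s0 \<Longrightarrow> 0 < e \<Longrightarrow> \<exists>d>0. \<forall>s. nonneg s \<and> supnorm (\<lambda>k. s k - s0 k) < d \<longrightarrow>
       \<bar>enn2real (mu i s) - enn2real (mu i s0)\<bar> < e"
    by simp_all
qed

lemma gains_nonneg: "nonneg s \<Longrightarrow> nonneg (gains s i)"
  unfolding nonneg_def gains_def using gam_Kinf Kinf_nonneg by auto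

lemma G_nonneg: "0 \<le> G s i"
  unfolding G_eq by simp

lemma G_mono:
  assumes s: "nonneg s" and st: "\<And>k. s k \<le> t k"
  shows "G s i \<le> G t i"
proof -
  have t: "nonneg t" using s st unfolding nonneg_def by (meson order_trans)
  have "gains s i k \<le> gains t i k" for k
    using s st gam_Kinf Kinf_mono unfolding nonneg_def gains_def by auto
  then have "mu i (gains s i) \<le> mu i (gains t i)"
    by (intro mu_mono gains_nonneg s t)
  then show ?thesis
    unfolding G_eq using mu_finite_continuous(1)[OF gains_nonneg[OF t]] by (simp add: enn2real_mono)
qed

lemma G_zero: "G (\<lambda>_. 0) i = 0"
proof -
  have "gains (\<lambda>_. 0) i = (\<lambda>_. 0)" using gam_Kinf Kinf_D(2) unfolding gains_def by auto
  then show ?thesis unfolding G_eq by (simp add: mu_zero)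
qed

lemma G_no_inputs: "Iset i = {} \<Longrightarrow> G s i = 0"
  using mu_zero unfolding G_eq gains_def by simp

lemma G_lower_bound:
  "\<exists>\<xi>. Kinf \<xi> \<and> (\<forall>s i a. nonneg s \<longrightarrow> a \<in> Iset i \<longrightarrow> \<xi> (gam i a (s a)) \<le> G s i)"
proof -
  obtain \<xi> where \<xi>: "Kinf \<xi>" "\<And>i s. nonneg s \<Longrightarrow> ennreal (\<xi> (supnorm s)) \<le> mu i s"
    using mu_lower_bound by blast
  have "\<xi> (gam i a (s a)) \<le> G s i" if s: "nonneg s" and a: "a \<in> Iset i" for s i a
  proof -
    have g0: "0 \<le> gam i a (s a)" using Kinf_nonneg[OF gam_Kinf[OF a]] s unfolding nonneg_def by blast
    have "gam i a (s a) \<le> supnorm (gains s i)"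
      using supnorm_ge[of "gains s i" a] a g0 unfolding gains_def by simp
    then have "\<xi> (gam i a (s a)) \<le> \<xi> (supnorm (gains s i))" using Kinf_mono[OF \<xi>(1) g0] by blast
    also have "\<dots> \<le> enn2real (mu i (gains s i))"
    proof -
      have "enn2real (ennreal (\<xi> (supnorm (gains s i)))) \<le> enn2real (mu i (gains s i))"
        using \<xi>(2)[OF gains_nonneg[OF s]] mu_finite_continuous(1)[OF gains_nonneg[OF s]]
        by (intro enn2real_mono) auto
      then show ?thesis using Kinf_nonneg[OF \<xi>(1) supnorm_nonneg, of "gains s i"] by simp
    qed
    finally show ?thesis unfolding G_eq .
  qed
  then show ?thesis using \<xi>(1) by blast
qed

lemma G_orthant_continuous: "orthant_continuous G"
  unfolding orthant_continuous_def
proof (intro allI impI)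
  fix s0 :: "'i \<Rightarrow> real" and i :: 'i and e :: real assume s0: "nonneg s0" and e: "0 < e"
  obtain d1 where d1: "0 < d1" "\<And>s. nonneg s \<Longrightarrow> supnorm (\<lambda>k. s k - gains s0 i k) < d1 \<Longrightarrow>
      \<bar>enn2real (mu i s) - enn2real (mu i (gains s0 i))\<bar> < e"
    using mu_finite_continuous(2)[OF gains_nonneg[OF s0] e] by blast
  have "\<exists>d>0. \<forall>y\<ge>0. \<bar>y - s0 k\<bar> < d \<longrightarrow> \<bar>gains (\<lambda>_. y) i k - gains s0 i k\<bar> < d1" for k
  proof (cases "k \<in> Iset i")
    case True
    then show ?thesis
      using Kinf_D(1)[OF gam_Kinf[OF True]] s0 d1(1)
      unfolding continuous_on_iff gains_def nonneg_def dist_real_def by (simp add: atLeast_def)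
  qed (use d1(1) in \<open>auto simp: gains_def\<close>)
  then have "\<exists>d>0. \<forall>k. \<forall>y\<ge>0. \<bar>y - s0 k\<bar> < d \<longrightarrow> \<bar>gains (\<lambda>_. y) i k - gains s0 i k\<bar> < d1"
    by (rule finite_uniform_pos) auto
  then obtain d where d: "0 < d" "\<And>k y. 0 \<le> y \<Longrightarrow> \<bar>y - s0 k\<bar> < d \<Longrightarrow> \<bar>gains (\<lambda>_. y) i k - gains s0 i k\<bar> < d1"
    by blast
  have "\<bar>G s i - G s0 i\<bar> < e" if s: "nonneg s" "\<forall>k. \<bar>s k - s0 k\<bar> < d" for s
  proof -
    have "gains s i k = gains (\<lambda>_. s k) i k" for k unfolding gains_def by simp
    then have "supnorm (\<lambda>k. gains s i k - gains s0 i k) < d1"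
      using d(2) s unfolding nonneg_def by (intro supnorm_less) auto
    then show ?thesis unfolding G_eq using d1(2)[OF gains_nonneg[OF s(1)]] by simp
  qed
  then show "\<exists>d>0. \<forall>s. nonneg s \<and> (\<forall>k. \<bar>s k - s0 k\<bar> < d) \<longrightarrow> \<bar>G s i - G s0 i\<bar> < e"
    using d(1) by blast
qed

lemma NJI_half_if_decay_path:
  assumes \<rho>: "Kinf \<rho>" and \<sigma>: "\<And>i. Kinf (\<lambda>r. \<sigma> r i)"
    and decay: "\<And>r i. 0 \<le> r \<Longrightarrow> Gam_rho \<rho> Iset gam mu (\<sigma> r) i \<le> \<sigma> r i"
  shows "NJI (Gam_rho (\<lambda>x. 1/2 * \<rho> x) Iset gam mu)"
  unfolding NJI_def
proof
  assume "\<exists>s. nonneg s \<and> s \<noteq> (\<lambda>_. 0) \<and> (\<forall>i. s i \<le> Gam_rho (\<lambda>x. 1/2 * \<rho> x) Iset gam mu s i)"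
  then obtain s where s: "nonneg s" "s \<noteq> (\<lambda>_. 0)" "\<And>i. s i \<le> G s i + 1/2 * \<rho> (G s i)"
    unfolding Gam_rho_def by blast
  obtain R k where R: "0 \<le> R" "\<And>i. s i \<le> \<sigma> R i" "\<sigma> R k = s k"
    using Kinf_family_touching_above[of \<sigma>, OF \<sigma> s(1)] by blast
  obtain j where "s j \<noteq> 0" using s(2) by auto
  then have "0 < s j" using nonneg_neq_0_pos[OF s(1)] by blast
  then have "0 < \<sigma> R j" using R(2)[of j] by linarith
  then have "R \<noteq> 0" using Kinf_D(2)[OF \<sigma>] by auto
  then have sk: "0 < s k" using Kinf_pos[OF \<sigma>, of R k] R(1,3) by simp
  define g where "g = G (\<sigma> R) k"
  have "G s k \<le> g" unfolding g_def by (rule G_mono[OF s(1) R(2)])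
  then have "s k \<le> g + 1/2 * \<rho> g" using s(3)[of k] Kinf_mono[OF \<rho> G_nonneg, of s k g] by simp
  moreover have "g + \<rho> g \<le> s k" using decay[OF R(1), of k] R(3) unfolding Gam_rho_def g_def by simp
  moreover have "0 \<le> g" unfolding g_def by (rule G_nonneg)
  ultimately have "\<rho> g = 0" using Kinf_nonneg[OF \<rho>, of g] by linarith
  then have "g = 0" using Kinf_eq_0_iff[OF \<rho> \<open>0 \<le> g\<close>] by simp
  then show False using \<open>s k \<le> g + 1/2 * \<rho> g\<close> sk Kinf_D(2)[OF \<rho>] by simp
qed

lemma path_strict_decay_imp_NJI:
  assumes "path_strict_decay Iset gam mu \<sigma>"
  shows "\<exists>\<rho>. Kinf \<rho> \<and> NJI (Gam_rho \<rho> Iset gam mu)"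
proof -
  note path = assms[unfolded path_strict_decay_def]
  obtain \<rho> where \<rho>: "Kinf \<rho>" and decay: "\<And>r i. 0 \<le> r \<Longrightarrow> Gam_rho \<rho> Iset gam mu (\<sigma> r) i \<le> \<sigma> r i"
    using path[THEN conjunct1] by blast
  have \<sigma>: "\<And>i. Kinf (\<lambda>r. \<sigma> r i)" using path[THEN conjunct2, THEN conjunct2, THEN conjunct1] ..
  show ?thesis
    using NJI_half_if_decay_path[OF \<rho> \<sigma> decay] Kinf_cmult[OF \<rho>, of "1/2"] by auto
qed

definition decay_point :: "('i \<Rightarrow> real) \<Rightarrow> bool" where
  "decay_point s \<longleftrightarrow> nonneg s \<and> (\<forall>k. G s k \<le> s k)"

lemma decay_point_reach_large:
  assumes "(j, i) \<in> {(a, b). a \<in> Iset b}\<^sup>*"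
  shows "\<exists>N. \<forall>s. decay_point s \<and> N \<le> s j \<longrightarrow> M \<le> s i"
proof -
  obtain \<xi> where \<xi>: "Kinf \<xi>" "\<And>s i a. nonneg s \<Longrightarrow> a \<in> Iset i \<Longrightarrow> \<xi> (gam i a (s a)) \<le> G s i"
    using G_lower_bound by blast
  from assms show ?thesis
  proof (induction arbitrary: M rule: rtrancl_induct)
    case (step a i)
    then have a: "a \<in> Iset i" by simp
    obtain y where y: "0 \<le> y" "M \<le> \<xi> y" using Kinf_D(4)[OF \<xi>(1)] by blast
    obtain M' where M': "0 \<le> M'" "y \<le> gam i a M'" using Kinf_D(4)[OF gam_Kinf[OF a]] by blast
    obtain N where N: "\<And>s. decay_point s \<and> N \<le> s j \<Longrightarrow> M' \<le> s a" using step.IH by blast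
    have "M \<le> s i" if s: "decay_point s" "N \<le> s j" for s
    proof -
      have "y \<le> gam i a (s a)" using Kinf_mono[OF gam_Kinf[OF a] M'(1)] N s M'(2) by fastforce
      then have "M \<le> \<xi> (gam i a (s a))" using Kinf_mono[OF \<xi>(1) y(1)] y(2) by fastforce
      also have "\<dots> \<le> s i" using \<xi>(2)[OF _ a] s(1) unfolding decay_point_def by (meson order_trans)
      finally show ?thesis .
    qed
    then show ?case by blast
  qed blast
qed

lemma decay_point_reach_pos:
  assumes "(j, i) \<in> {(a, b). a \<in> Iset b}\<^sup>*" and "0 < N"
  shows "\<exists>M>0. \<forall>s. decay_point s \<and> N \<le> s j \<longrightarrow> M \<le> s i"
proof -
  obtain \<xi> where \<xi>: "Kinf \<xi>" "\<And>s i a. nonneg s \<Longrightarrow> a \<in> Iset i \<Longrightarrow> \<xi> (gam i a (s a)) \<le> G s i"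
    using G_lower_bound by blast
  from assms show ?thesis
  proof (induction rule: rtrancl_induct)
    case (step a i)
    then have a: "a \<in> Iset i" by simp
    obtain M' where M': "0 < M'" "\<And>s. decay_point s \<and> N \<le> s j \<Longrightarrow> M' \<le> s a" using step by blast
    have "\<xi> (gam i a M') \<le> s i" if s: "decay_point s" "N \<le> s j" for s
    proof -
      have "gam i a M' \<le> gam i a (s a)" using Kinf_mono[OF gam_Kinf[OF a]] M' s by fastforce
      then have "\<xi> (gam i a M') \<le> \<xi> (gam i a (s a))"
        using Kinf_mono[OF \<xi>(1) Kinf_nonneg[OF gam_Kinf[OF a]]] M'(1) by simp
      also have "\<dots> \<le> s i" using \<xi>(2)[OF _ a] s(1) unfolding decay_point_def by (meson order_trans)
      finally show ?thesis .
    qed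
    moreover have "0 < \<xi> (gam i a M')" using Kinf_pos[OF \<xi>(1) Kinf_pos[OF gam_Kinf[OF a] M'(1)]] .
    ultimately show ?case by blast
  qed blast
qed

lemma decay_point_large_if_sum_large:
  assumes "strongly_connected Iset"
  shows "\<exists>r0. \<forall>s. decay_point s \<and> r0 \<le> (\<Sum>k\<in>UNIV. s k) \<longrightarrow> M \<le> s i"
proof -
  have "\<exists>N. \<forall>j. \<forall>s. decay_point s \<and> N \<le> s j \<longrightarrow> M \<le> s i"
    using decay_point_reach_large assms unfolding strongly_connected_def
    by (intro finite_uniform_bound) (blast, meson order_trans)
  then obtain N where N: "\<And>j s. decay_point s \<Longrightarrow> N \<le> s j \<Longrightarrow> M \<le> s i" by blast
  have "M \<le> s i" if "decay_point s" "real CARD('i) * N \<le> (\<Sum>k\<in>UNIV. s k)" for s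
  proof -
    obtain j where "(\<Sum>k\<in>UNIV. s k) \<le> real CARD('i) * s j" using exists_sum_le_card_mult by blast
    then have "real CARD('i) * N \<le> real CARD('i) * s j" using that(2) by linarith
    then have "N \<le> s j" by (simp add: mult_le_cancel_left_pos)
    then show ?thesis using N that(1) by blast
  qed
  then show ?thesis by blast
qed

lemma decay_point_pos_if_sum_pos:
  assumes "strongly_connected Iset" and "0 < r"
  shows "\<exists>e>0. \<forall>s. decay_point s \<and> r \<le> (\<Sum>k\<in>UNIV. s k) \<longrightarrow> e \<le> s i"
proof -
  have "0 < r / real CARD('i)" using assms(2) by simp
  then have "\<exists>e>0. \<forall>j. \<forall>s. decay_point s \<and> r / real CARD('i) \<le> s j \<longrightarrow> e \<le> s i"
    using decay_point_reach_pos assms(1) unfolding strongly_connected_def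
    by (intro finite_uniform_pos) (blast, meson order_trans)
  then obtain e where e: "0 < e" "\<And>j s. decay_point s \<Longrightarrow> r / real CARD('i) \<le> s j \<Longrightarrow> e \<le> s i"
    by blast
  have "e \<le> s i" if "decay_point s" "r \<le> (\<Sum>k\<in>UNIV. s k)" for s
  proof -
    obtain j where "(\<Sum>k\<in>UNIV. s k) \<le> real CARD('i) * s j" using exists_sum_le_card_mult by blast
    then have "r / real CARD('i) \<le> s j" using that(2) by (simp add: field_simps)
    then show ?thesis using e that(1) by blast
  qed
  then show ?thesis using e(1) by blast
qed

end

section \<open>A path of strict decay from the NJI condition\<close>

locale nji_gain_op = gain_op Iset gam mu for Iset :: "'i::finite \<Rightarrow> 'i set" and gam mu +
  fixes \<rho> :: "real \<Rightarrow> real"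
  assumes rho: "Kinf \<rho>" and nji: "NJI (Gam_rho \<rho> Iset gam mu)"
    and strongly_connected: "strongly_connected Iset"
begin

definition Gam_c :: "real \<Rightarrow> ('i \<Rightarrow> real) \<Rightarrow> 'i \<Rightarrow> real" where
  "Gam_c c s i = G s i + c * \<rho> (G s i)"

lemma Gam_rho_cmult: "Gam_rho (\<lambda>x. c * \<rho> x) Iset gam mu = Gam_c c"
  unfolding Gam_rho_def Gam_c_def by simp

lemma Gam_rho_eq: "Gam_rho \<rho> Iset gam mu = Gam_c 1"
  unfolding Gam_rho_def Gam_c_def by simp

lemma rho_G_nonneg: "0 \<le> \<rho> (G s i)"
  using Kinf_nonneg[OF rho G_nonneg] .

lemma G_le_Gam_c: "0 \<le> c \<Longrightarrow> G s i \<le> Gam_c c s i"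
  unfolding Gam_c_def using rho_G_nonneg[of s i] by simp

lemma Gam_c_nonneg: "0 \<le> c \<Longrightarrow> 0 \<le> Gam_c c s i"
  using G_le_Gam_c G_nonneg order_trans by blast

lemma Gam_c_mono:
  assumes "0 \<le> c" "nonneg s" "\<And>k. s k \<le> t k"
  shows "Gam_c c s i \<le> Gam_c c t i"
proof -
  have "G s i \<le> G t i" by (rule G_mono[OF assms(2,3)])
  moreover from this have "\<rho> (G s i) \<le> \<rho> (G t i)" by (rule Kinf_mono[OF rho G_nonneg])
  ultimately show ?thesis unfolding Gam_c_def using assms(1) by (simp add: add_mono mult_left_mono)
qed

lemma Gam_c_mono_factor: "c \<le> c' \<Longrightarrow> Gam_c c s i \<le> Gam_c c' s i"
  unfolding Gam_c_def using rho_G_nonneg[of s i] by (simp add: mult_right_mono)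

lemma Gam_c_strict_mono_factor: "c < c' \<Longrightarrow> 0 < G s i \<Longrightarrow> Gam_c c s i < Gam_c c' s i"
  unfolding Gam_c_def using Kinf_pos[OF rho, of "G s i"] by simp

lemma Gam_c_zero: "Gam_c c (\<lambda>_. 0) i = 0"
  unfolding Gam_c_def G_zero using Kinf_D(2)[OF rho] by simp

lemma Gam_c_orthant_continuous: "orthant_continuous (Gam_c c)"
proof -
  have "continuous_on {0..} (\<lambda>y. y + c * \<rho> y)"
    using Kinf_D(1)[OF rho] by (intro continuous_intros)
  then show ?thesis
    using orthant_continuous_compose[OF G_orthant_continuous G_nonneg] unfolding Gam_c_def by blast
qed

lemma NJI_Gam_c: "c \<le> 1 \<Longrightarrow> NJI (Gam_c c)"
  using nji Gam_c_mono_factor[of c 1] unfolding Gam_rho_eq NJI_def by (meson order_trans)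

lemma Gam_c_decay_between:
  assumes "0 \<le> c" "nonneg a" "\<And>i. a i \<le> y i" "\<And>i. y i \<le> b i" "\<And>i. Gam_c c b i \<le> a i"
  shows "Gam_c c y i \<le> y i"
proof -
  have "nonneg y" using assms(2,3) unfolding nonneg_def by (meson order_trans)
  then have "Gam_c c y i \<le> Gam_c c b i" using Gam_c_mono assms(1,4) by blast
  then show ?thesis using assms(3,5)[of i] by linarith
qed

text \<open>A limit \<open>L\<close> of such a sequence satisfies \<open>L \<le> max (\<Gamma>\<^sub>\<rho>(L)) (L/2)\<close>, hence \<open>L \<le> \<Gamma>\<^sub>\<rho>(L)\<close>.\<close>

lemma NJI_descent_tendsto_0:
  assumes z: "\<And>k. nonneg (z k)" and dec: "\<And>k i. z (Suc k) i \<le> z k i"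
    and step: "\<And>k i. z (Suc k) i \<le> max (Gam_c 1 (z k) i) (z k i / 2)"
  shows "(\<lambda>k. z k i) \<longlonglongrightarrow> 0"
proof -
  have dec_seq: "decseq (\<lambda>k. z k j)" for j using dec by (intro decseq_SucI) auto
  have "\<exists>L. (\<lambda>k. z k j) \<longlonglongrightarrow> L" for j
  proof -
    have "\<forall>k. 0 \<le> z k j" using z unfolding nonneg_def by blast
    then show ?thesis by (rule decseq_convergent[OF dec_seq]) blast
  qed
  then have "\<forall>j. \<exists>L. (\<lambda>k. z k j) \<longlonglongrightarrow> L" by blast
  from choice[OF this] obtain L where L: "\<And>j. (\<lambda>k. z k j) \<longlonglongrightarrow> L j" by blast
  have L_le: "L j \<le> z k j" for j k using decseq_ge[OF dec_seq L] .
  have L_nonneg: "nonneg L"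
    using L z unfolding nonneg_def by (blast intro: LIMSEQ_le_const)
  have "L j \<le> Gam_c 1 L j" for j
  proof -
    have lim: "(\<lambda>k. max (Gam_c 1 (z k) j) (z k j / 2)) \<longlonglongrightarrow> max (Gam_c 1 L j) (L j / 2)"
      by (intro tendsto_max tendsto_divide orthant_continuous_tendsto[OF Gam_c_orthant_continuous]
          L L_nonneg z tendsto_const) auto
    have "L j \<le> max (Gam_c 1 (z k) j) (z k j / 2)" for k
      using L_le[of j "Suc k"] step[of k j] by linarith
    then have "L j \<le> max (Gam_c 1 L j) (L j / 2)" by (intro LIMSEQ_le_const[OF lim]) auto
    then show ?thesis using L_nonneg Gam_c_nonneg[of 1 L j] unfolding nonneg_def
      by (cases "L j = 0") (auto simp: max_def split: if_splits)
  qed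
  then have "L = (\<lambda>_. 0)" using NJI_Gam_c[of 1] L_nonneg unfolding NJI_def by blast
  then show ?thesis using L[of i] by simp
qed

primrec descent :: "(nat \<Rightarrow> real) \<Rightarrow> ('i \<Rightarrow> real) \<Rightarrow> nat \<Rightarrow> 'i \<Rightarrow> real" where
  "descent c b 0 = b"
| "descent c b (Suc k) = (\<lambda>i. max (Gam_c (c (Suc k)) (descent c b k) i) (descent c b k i / 2))"

lemma descent_pos: "0 < b i \<Longrightarrow> 0 < descent c b k i"
  by (induction k) (auto simp: less_max_iff_disj)

context
  fixes c :: "nat \<Rightarrow> real" and b :: "'i \<Rightarrow> real"
  assumes factors: "decseq c" "\<And>k. 0 \<le> c k" "c 0 \<le> 1"
    and start: "nonneg b" "\<And>i. Gam_c (c 0) b i \<le> b i"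
begin

lemma factor_le_1: "c k \<le> 1"
  using decseqD[OF factors(1), of 0 k] factors(3) by simp

lemma descent_decay: "nonneg (descent c b k) \<and> (\<forall>i. Gam_c (c k) (descent c b k) i \<le> descent c b k i)"
proof (induction k)
  case (Suc k)
  let ?s = "descent c b k" and ?c = "c (Suc k)"
  have "Gam_c ?c ?s i \<le> ?s i" for i
    using Gam_c_mono_factor[OF decseq_SucD[OF factors(1), of k], of ?s i] Suc.IH by (meson order_trans)
  moreover have "?s i / 2 \<le> ?s i" for i using Suc.IH unfolding nonneg_def by simp
  ultimately have le: "descent c b (Suc k) i \<le> ?s i" for i by simp
  have nonneg: "nonneg (descent c b (Suc k))"
    using Gam_c_nonneg[OF factors(2)] unfolding nonneg_def by (auto intro: max.coboundedI1)
  have "Gam_c ?c (descent c b (Suc k)) i \<le> descent c b (Suc k) i" for i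
    using Gam_c_mono[OF factors(2)[of "Suc k"] nonneg le, of i] by simp
  then show ?case using nonneg by blast
qed (use start in auto)

lemma descent_decreasing: "descent c b (Suc k) i \<le> descent c b k i"
proof -
  have "Gam_c (c (Suc k)) (descent c b k) i \<le> descent c b k i"
    using Gam_c_mono_factor[OF decseq_SucD[OF factors(1), of k], of "descent c b k" i] descent_decay[of k]
    by (meson order_trans)
  then show ?thesis using descent_decay[of k] unfolding nonneg_def by simp
qed

lemma descent_tendsto_0: "(\<lambda>k. descent c b k i) \<longlonglongrightarrow> 0"
proof (rule NJI_descent_tendsto_0)
  show "descent c b (Suc k) j \<le> max (Gam_c 1 (descent c b k) j) (descent c b k j / 2)" for k j
    using Gam_c_mono_factor[OF factor_le_1, of "Suc k" "descent c b k" j] by (auto simp: max_def)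
qed (use descent_decay descent_decreasing in auto)

lemma descent_sum_decreasing:
  assumes "b \<noteq> (\<lambda>_. 0)"
  shows "(\<Sum>i\<in>UNIV. descent c b (Suc k) i) < (\<Sum>i\<in>UNIV. descent c b k i)"
proof -
  let ?s = "descent c b k" and ?c = "c (Suc k)"
  have s: "nonneg ?s" using descent_decay by blast
  obtain j where "b j \<noteq> 0" using assms by auto
  then have "0 < ?s j" using descent_pos nonneg_neq_0_pos[OF start(1)] by blast
  then have "?s \<noteq> (\<lambda>_. 0)" by auto
  then have "\<not> (\<forall>i. ?s i \<le> Gam_c ?c ?s i)" using NJI_Gam_c[OF factor_le_1] s unfolding NJI_def by blast
  then obtain i where "Gam_c ?c ?s i < ?s i" by (auto simp: not_le)
  moreover have "?s i / 2 < ?s i"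
    using Gam_c_nonneg[OF factors(2), of "Suc k" ?s i] \<open>Gam_c ?c ?s i < ?s i\<close> by linarith
  ultimately have strict: "descent c b (Suc k) i < ?s i" by simp
  show ?thesis
    by (rule sum_strict_mono_ex1) (simp, blast intro: descent_decreasing, use strict in blast)
qed

lemma descent_strictly_decreasing:
  assumes c_strict: "\<And>k. c (Suc k) < c k" and b_pos: "\<And>i. 0 < b i"
  shows "descent c b (Suc k) i < descent c b k i"
proof -
  let ?s = "descent c b k"
  have pos: "0 < ?s i" using descent_pos b_pos by blast
  have "Gam_c (c (Suc k)) ?s i < ?s i"
  proof (cases "0 < G ?s i")
    case True
    then show ?thesis
      using Gam_c_strict_mono_factor[OF c_strict] descent_decay[of k] by (meson order_less_le_trans)
  next
    case False
    then have "G ?s i = 0" using G_nonneg[of ?s i] by linarith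
    then show ?thesis using pos Kinf_D(2)[OF rho] unfolding Gam_c_def by simp
  qed
  then show ?thesis using pos by simp
qed

lemma interp_descent_decay:
  assumes "descending_knots t (descent c b)" and c': "0 \<le> c'" "\<And>k. c' \<le> c k"
    and r: "0 \<le> r" "r \<le> t 0"
  shows "Gam_c c' (interp t (descent c b) r) i \<le> interp t (descent c b) r i"
proof (cases "r = 0")
  case True
  then show ?thesis unfolding interp_def using Gam_c_zero by simp
next
  case False
  interpret descending_knots t "descent c b" by fact
  obtain j where j: "t (Suc j) < r" "r \<le> t j" using interp_segment[of r] False r by auto
  show ?thesis
  proof (rule Gam_c_decay_between[OF c'(1)])
    show "nonneg (descent c b (Suc j))" using descent_decay by blast
    show "descent c b (Suc j) i \<le> interp t (descent c b) r i" "interp t (descent c b) r i \<le> descent c b j i" for i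
      using interp_between[of j r i] j by auto
    show "Gam_c c' (descent c b j) i \<le> descent c b (Suc j) i" for i
      using Gam_c_mono_factor[OF c'(2)[of "Suc j"], of "descent c b j" i] by simp
  qed
qed

end

definition decay_paths :: "real \<Rightarrow> (real \<Rightarrow> 'i \<Rightarrow> real) set" where
  "decay_paths R = {f. (\<forall>r. 0 \<le> r \<and> r \<le> R \<longrightarrow>
        nonneg (f r) \<and> (\<forall>i. Gam_c 1 (f r) i \<le> f r i) \<and> (\<Sum>i\<in>UNIV. f r i) = r)
     \<and> (\<forall>r r' i. 0 \<le> r \<and> r \<le> r' \<and> r' \<le> R \<longrightarrow> f r i \<le> f r' i)}"

lemma decay_paths_antimono: "R \<le> R' \<Longrightarrow> decay_paths R' \<subseteq> decay_paths R"
  unfolding decay_paths_def by auto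

lemma decay_pathsD:
  assumes "f \<in> decay_paths R" "0 \<le> r" "r \<le> R"
  shows "nonneg (f r)" "\<And>i. Gam_c 1 (f r) i \<le> f r i" "(\<Sum>i\<in>UNIV. f r i) = r"
    "\<And>r' i. r' \<le> r \<Longrightarrow> 0 \<le> r' \<Longrightarrow> f r' i \<le> f r i"
  using assms unfolding decay_paths_def by auto

text \<open>Taking the sums of the iterates as knots makes the interpolated path satisfy \<open>\<Sum>f(r) = r\<close>.\<close>

lemma decay_paths_nonempty: "decay_paths R \<noteq> {}"
proof -
  have "0 < max R 1" by simp
  then obtain b where b: "nonneg b" "(\<Sum>i\<in>UNIV. b i) = max R 1" "\<And>i. Gam_c 1 b i \<le> b i"
    using NJI_decay_point_on_simplex[OF Gam_c_orthant_continuous _ NJI_Gam_c] Gam_c_nonneg[of 1]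
    by (metis order_refl zero_le_one)
  have b_ne: "b \<noteq> (\<lambda>_. 0)" using b(2) by auto
  let ?c = "\<lambda>_::nat. 1::real" and ?z = "descent (\<lambda>_. 1) b"
  define t where "t k = (\<Sum>i\<in>UNIV. ?z k i)" for k
  have factors: "decseq ?c" "\<And>k. 0 \<le> ?c k" "?c 0 \<le> 1" by auto
  note descent_lemmas = descent_decay[OF factors b(1,3)] descent_decreasing[OF factors b(1,3)]
  interpret descending_knots t ?z
  proof
    show "t (Suc j) < t j" for j
      unfolding t_def by (rule descent_sum_decreasing[OF factors b(1,3) b_ne])
    show "0 < t j" for j
    proof -
      obtain i where "b i \<noteq> 0" using b_ne by auto
      then have "0 < ?z j i" using descent_pos nonneg_neq_0_pos[OF b(1)] by blast
      moreover have "?z j i \<le> t j"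
        unfolding t_def by (rule member_le_sum) (use descent_lemmas(1) in \<open>auto simp: nonneg_def\<close>)
      ultimately show ?thesis by linarith
    qed
    show "t \<longlonglongrightarrow> 0"
      unfolding t_def
      using tendsto_sum[of UNIV "\<lambda>i k. ?z k i" "\<lambda>_. 0"] descent_tendsto_0[OF factors b(1,3)] by simp
  qed (use descent_lemmas in \<open>auto simp: nonneg_def\<close>)
  have t0: "t 0 = max R 1" unfolding t_def using b(2) by simp
  have "interp t ?z \<in> decay_paths (max R 1)"
    unfolding decay_paths_def
    using interp_nonneg interp_sum[OF t_def] interp_mono t0
      interp_descent_decay[OF factors b(1,3) descending_knots_axioms, of 1]
    by (auto simp: nonneg_def)
  then show ?thesis using decay_paths_antimono[of R "max R 1"] by auto
qed

lemma decay_paths_decay_point: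
  assumes "f \<in> decay_paths R" "0 \<le> r" "r \<le> R"
  shows "decay_point (f r)"
  using decay_pathsD[OF assms] G_le_Gam_c[of 1] unfolding decay_point_def by (meson order_trans zero_le_one)

lemma decay_paths_lipschitz:
  assumes f: "f \<in> decay_paths R" and r: "0 \<le> r" "r \<le> r'" "r' \<le> R"
  shows "f r' i - f r i \<le> r' - r"
proof -
  have "f r' i - f r i \<le> (\<Sum>j\<in>UNIV. f r' j - f r j)"
    by (rule member_le_sum[of i UNIV "\<lambda>j. f r' j - f r j", simplified])
      (use decay_pathsD(4)[OF f] r in auto)
  also have "\<dots> = r' - r" using decay_pathsD(3)[OF f] r by (simp add: sum_subtractf)
  finally show ?thesis .
qed

definition lower_path :: "real \<Rightarrow> real \<Rightarrow> 'i \<Rightarrow> real" where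
  "lower_path R r i = Inf ((\<lambda>f. f r i) ` decay_paths R)"

lemma lower_path_le:
  assumes f: "f \<in> decay_paths R" and r: "0 \<le> r" "r \<le> R"
  shows "lower_path R r i \<le> f r i"
proof -
  have "bdd_below ((\<lambda>f. f r i) ` decay_paths R)"
    using decay_pathsD(1)[OF _ r] unfolding nonneg_def by (intro bdd_belowI[of _ 0]) auto
  then show ?thesis unfolding lower_path_def using f by (intro cInf_lower) auto
qed

lemma lower_path_greatest: "(\<And>f. f \<in> decay_paths R \<Longrightarrow> a \<le> f r i) \<Longrightarrow> a \<le> lower_path R r i"
  unfolding lower_path_def using decay_paths_nonempty by (intro cInf_greatest) auto

lemma lower_path_nonneg: "0 \<le> r \<Longrightarrow> r \<le> R \<Longrightarrow> 0 \<le> lower_path R r i"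
  using decay_pathsD(1) unfolding nonneg_def by (blast intro: lower_path_greatest)

lemma lower_path_le_r:
  assumes r: "0 \<le> r" "r \<le> R"
  shows "lower_path R r i \<le> r"
proof -
  obtain f where f: "f \<in> decay_paths R" using decay_paths_nonempty by blast
  have "f r i \<le> (\<Sum>j\<in>UNIV. f r j)"
    by (rule member_le_sum) (use decay_pathsD(1)[OF f r] in \<open>auto simp: nonneg_def\<close>)
  then show ?thesis using lower_path_le[OF f r, of i] decay_pathsD(3)[OF f r] by linarith
qed

lemma lower_path_decay:
  assumes r: "0 \<le> r" "r \<le> R"
  shows "Gam_c 1 (lower_path R r) i \<le> lower_path R r i"
proof (rule lower_path_greatest)
  fix f assume f: "f \<in> decay_paths R"
  have "Gam_c 1 (lower_path R r) i \<le> Gam_c 1 (f r) i"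
    using lower_path_nonneg[OF r] lower_path_le[OF f r] by (intro Gam_c_mono) (auto simp: nonneg_def)
  also have "\<dots> \<le> f r i" by (rule decay_pathsD(2)[OF f r])
  finally show "Gam_c 1 (lower_path R r) i \<le> f r i" .
qed

lemma lower_path_mono:
  assumes r: "0 \<le> r" "r \<le> r'" "r' \<le> R"
  shows "lower_path R r i \<le> lower_path R r' i"
proof (rule lower_path_greatest)
  fix f assume f: "f \<in> decay_paths R"
  have "lower_path R r i \<le> f r i" by (rule lower_path_le[OF f]) (use r in auto)
  also have "\<dots> \<le> f r' i" using decay_pathsD(4)[OF f _ r(3)] r by auto
  finally show "lower_path R r i \<le> f r' i" .
qed

lemma lower_path_lipschitz:
  assumes r: "0 \<le> r" "r \<le> r'" "r' \<le> R"
  shows "lower_path R r' i \<le> lower_path R r i + (r' - r)"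
proof -
  have "lower_path R r' i - (r' - r) \<le> lower_path R r i"
  proof (rule lower_path_greatest)
    fix f assume f: "f \<in> decay_paths R"
    have "lower_path R r' i \<le> f r' i" by (rule lower_path_le[OF f]) (use r in auto)
    then show "lower_path R r' i - (r' - r) \<le> f r i" using decay_paths_lipschitz[OF f r, of i] by linarith
  qed
  then show ?thesis by linarith
qed

lemma lower_path_mono_length:
  assumes "R \<le> R'" "0 \<le> r" "r \<le> R"
  shows "lower_path R r i \<le> lower_path R' r i"
  using decay_paths_antimono[OF assms(1)] lower_path_le[OF _ assms(2,3)]
  by (blast intro: lower_path_greatest)

lemma lower_path_pos:
  assumes "0 < r"
  shows "\<exists>e>0. \<forall>R. r \<le> R \<longrightarrow> e \<le> lower_path R r i"
proof -
  obtain e where e: "0 < e" "\<And>s. decay_point s \<and> r \<le> (\<Sum>k\<in>UNIV. s k) \<Longrightarrow> e \<le> s i"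
    using decay_point_pos_if_sum_pos[OF strongly_connected assms] by blast
  have "e \<le> lower_path R r i" if "r \<le> R" for R
    using e(2) decay_paths_decay_point decay_pathsD(3) assms that
    by (intro lower_path_greatest) (metis less_imp_le order_refl)
  then show ?thesis using e(1) by blast
qed

lemma lower_path_large: "\<exists>r0. \<forall>r R. r0 \<le> r \<and> 0 \<le> r \<and> r \<le> R \<longrightarrow> M \<le> lower_path R r i"
proof -
  obtain r0 where r0: "\<And>s. decay_point s \<and> r0 \<le> (\<Sum>k\<in>UNIV. s k) \<Longrightarrow> M \<le> s i"
    using decay_point_large_if_sum_large[OF strongly_connected] by blast
  have "M \<le> lower_path R r i" if "r0 \<le> r" "0 \<le> r" "r \<le> R" for r R
    using r0 decay_paths_decay_point decay_pathsD(3) that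
    by (intro lower_path_greatest) (metis order_refl)
  then show ?thesis by blast
qed

definition limit_path :: "real \<Rightarrow> 'i \<Rightarrow> real" where
  "limit_path r i = (SUP N. lower_path (r + real N) r i)"

lemma limit_path_bdd: "0 \<le> r \<Longrightarrow> bdd_above (range (\<lambda>N. lower_path (r + real N) r i))"
  using lower_path_le_r by (intro bdd_aboveI[of _ r]) auto

lemma limit_path_ge: "0 \<le> r \<Longrightarrow> lower_path (r + real N) r i \<le> limit_path r i"
  unfolding limit_path_def by (rule cSUP_upper[OF _ limit_path_bdd]) auto

lemma limit_path_le: "(\<And>N. lower_path (r + real N) r i \<le> a) \<Longrightarrow> limit_path r i \<le> a"
  unfolding limit_path_def by (rule cSUP_least) auto

lemma limit_path_tendsto: "0 \<le> r \<Longrightarrow> (\<lambda>N. lower_path (r + real N) r i) \<longlonglongrightarrow> limit_path r i"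
  unfolding limit_path_def
  by (intro LIMSEQ_incseq_SUP limit_path_bdd) (auto simp: incseq_def intro: lower_path_mono_length)

lemma limit_path_nonneg: "0 \<le> r \<Longrightarrow> nonneg (limit_path r)"
  using limit_path_ge[of r 0] lower_path_nonneg[of r] unfolding nonneg_def by (meson le_add_same_cancel1 of_nat_0_le_iff order_trans)

lemma limit_path_le_r: "0 \<le> r \<Longrightarrow> limit_path r i \<le> r"
  by (rule limit_path_le) (simp add: lower_path_le_r)

lemma limit_path_mono:
  assumes r: "0 \<le> r" "r \<le> r'"
  shows "limit_path r i \<le> limit_path r' i"
proof (rule limit_path_le)
  fix N
  have "lower_path (r + real N) r i \<le> lower_path (r' + real N) r i"
    by (rule lower_path_mono_length) (use r in auto)
  also have "\<dots> \<le> lower_path (r' + real N) r' i" by (rule lower_path_mono) (use r in auto)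
  also have "\<dots> \<le> limit_path r' i" by (rule limit_path_ge) (use r in auto)
  finally show "lower_path (r + real N) r i \<le> limit_path r' i" .
qed

lemma limit_path_lipschitz:
  assumes r: "0 \<le> r" "r \<le> r'"
  shows "limit_path r' i \<le> limit_path r i + (r' - r)"
proof (rule limit_path_le)
  fix N
  define N' where "N' = N + nat \<lceil>r' - r\<rceil>"
  have "lower_path (r' + real N) r' i \<le> lower_path (r' + real N) r i + (r' - r)"
    by (rule lower_path_lipschitz) (use r in auto)
  also have "lower_path (r' + real N) r i \<le> lower_path (r + real N') r i"
    by (rule lower_path_mono_length) (use r in \<open>auto simp: N'_def, linarith\<close>)
  also have "\<dots> \<le> limit_path r i" by (rule limit_path_ge[OF r(1)])
  finally show "lower_path (r' + real N) r' i \<le> limit_path r i + (r' - r)" by simp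
qed

lemma limit_path_decay:
  assumes r: "0 \<le> r"
  shows "Gam_c 1 (limit_path r) i \<le> limit_path r i"
proof (rule LIMSEQ_le[OF _ limit_path_tendsto[OF r]])
  show "(\<lambda>N. Gam_c 1 (lower_path (r + real N) r) i) \<longlonglongrightarrow> Gam_c 1 (limit_path r) i"
    using lower_path_nonneg r limit_path_tendsto[OF r] limit_path_nonneg[OF r]
    by (intro orthant_continuous_tendsto[OF Gam_c_orthant_continuous]) (auto simp: nonneg_def)
  show "\<exists>N. \<forall>n\<ge>N. Gam_c 1 (lower_path (r + real n) r) i \<le> lower_path (r + real n) r i"
    using lower_path_decay r by auto
qed

lemma limit_path_pos: "0 < r \<Longrightarrow> 0 < limit_path r i"
proof -
  assume r: "0 < r"
  obtain e where "0 < e" "\<And>R. r \<le> R \<Longrightarrow> e \<le> lower_path R r i" using lower_path_pos[OF r] by blast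
  then show ?thesis using limit_path_ge[of r 0 i] r by fastforce
qed

lemma limit_path_large: "\<exists>r0\<ge>0. \<forall>r\<ge>r0. M \<le> limit_path r i"
proof -
  obtain r0 where r0: "\<And>r R. r0 \<le> r \<Longrightarrow> 0 \<le> r \<Longrightarrow> r \<le> R \<Longrightarrow> M \<le> lower_path R r i"
    using lower_path_large[of M i] by blast
  have "M \<le> limit_path r i" if "max r0 0 \<le> r" for r
    using r0[of r "r + real 0"] limit_path_ge[of r 0 i] that by simp
  then show ?thesis by (intro exI[of _ "max r0 0"]) auto
qed

text \<open>Beyond \<open>r = 1\<close> the limit path is made strictly increasing by subtracting \<open>margin / (1 + r)\<close>;
  the margin is paid for by halving \<open>\<rho>\<close>. Components without inputs have \<open>\<Gamma>\<^sub>i = 0\<close> and need no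
  room from \<open>\<rho>\<close>.\<close>

definition margin :: real where
  "margin = Min (range (\<lambda>i. if 0 < G (limit_path 1) i then \<rho> (G (limit_path 1) i) / 2 else limit_path 1 i))"

lemma margin_pos: "0 < margin"
  unfolding margin_def using Kinf_pos[OF rho] limit_path_pos[of 1] by (subst Min_gr_iff) auto

lemma margin_le:
  "margin \<le> (if 0 < G (limit_path 1) i then \<rho> (G (limit_path 1) i) / 2 else limit_path 1 i)"
  unfolding margin_def by (rule Min_le) auto

lemma limit_path_margin:
  assumes r: "1 \<le> r"
  shows "Gam_c (1/2) (limit_path r) i + margin \<le> limit_path r i"
proof (cases "0 < G (limit_path 1) i")
  case True
  have "G (limit_path 1) i \<le> G (limit_path r) i"
    using limit_path_nonneg[of 1] limit_path_mono[of 1 r] r by (intro G_mono) auto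
  then have "\<rho> (G (limit_path 1) i) \<le> \<rho> (G (limit_path r) i)" by (rule Kinf_mono[OF rho G_nonneg])
  then have "margin \<le> \<rho> (G (limit_path r) i) / 2" using margin_le[of i] True by simp
  moreover have "Gam_c 1 (limit_path r) i \<le> limit_path r i" by (rule limit_path_decay) (use r in auto)
  ultimately show ?thesis unfolding Gam_c_def by simp
next
  case False
  obtain \<xi> where \<xi>: "Kinf \<xi>" "\<And>s i a. nonneg s \<Longrightarrow> a \<in> Iset i \<Longrightarrow> \<xi> (gam i a (s a)) \<le> G s i"
    using G_lower_bound by blast
  have "Iset i = {}"
  proof (rule ccontr)
    assume "Iset i \<noteq> {}"
    then obtain a where a: "a \<in> Iset i" by blast
    have "0 < \<xi> (gam i a (limit_path 1 a))"
      using Kinf_pos[OF \<xi>(1) Kinf_pos[OF gam_Kinf[OF a] limit_path_pos]] by simp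
    also have "\<dots> \<le> G (limit_path 1) i" using \<xi>(2)[OF limit_path_nonneg a] by simp
    finally show False using False by simp
  qed
  then have "Gam_c (1/2) (limit_path r) i = 0"
    using G_no_inputs[of i "limit_path r"] Kinf_D(2)[OF rho] unfolding Gam_c_def by simp
  moreover have "margin \<le> limit_path r i"
    using margin_le[of i] False limit_path_mono[of 1 r i] r by simp
  ultimately show ?thesis by simp
qed

definition shifted_path :: "real \<Rightarrow> 'i \<Rightarrow> real" where
  "shifted_path r i = limit_path r i - margin / (1 + r)"

lemma shifted_path_bounds:
  assumes r: "1 \<le> r"
  shows "Gam_c (1/2) (limit_path r) i + margin / 2 \<le> shifted_path r i" "shifted_path r i \<le> limit_path r i"
proof -
  have "margin / (1 + r) \<le> margin / 2" using margin_pos r by (intro divide_left_mono) auto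
  then show "Gam_c (1/2) (limit_path r) i + margin / 2 \<le> shifted_path r i"
    unfolding shifted_path_def using limit_path_margin[OF r, of i] by linarith
  show "shifted_path r i \<le> limit_path r i" unfolding shifted_path_def using margin_pos r by simp
qed

lemma shifted_path_pos: "1 \<le> r \<Longrightarrow> 0 < shifted_path r i"
  using shifted_path_bounds(1)[of r i] Gam_c_nonneg[of "1/2" "limit_path r" i] margin_pos by linarith

lemma shifted_path_decay:
  assumes r: "1 \<le> r"
  shows "Gam_c (1/2) (shifted_path r) i \<le> shifted_path r i"
proof -
  have "nonneg (shifted_path r)" using shifted_path_pos[OF r] unfolding nonneg_def by (simp add: less_imp_le)
  then have "Gam_c (1/2) (shifted_path r) i \<le> Gam_c (1/2) (limit_path r) i"
    using shifted_path_bounds(2)[OF r] by (intro Gam_c_mono) auto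
  also have "\<dots> \<le> shifted_path r i" using shifted_path_bounds(1)[OF r, of i] margin_pos by linarith
  finally show ?thesis .
qed

lemma shifted_path_slope_bounded:
  assumes b: "1 \<le> b"
  shows "slope_bounded (\<lambda>r. shifted_path r i) 1 b (margin / (1 + b)^2) (1 + margin)"
  unfolding slope_bounded_def
proof (intro allI impI)
  fix x y assume xy: "1 \<le> x" "x \<le> y" "y \<le> b"
  define d where "d = margin * (y - x) / ((1 + x) * (1 + y))"
  have "margin / (1 + x) - margin / (1 + y) = d" unfolding d_def using xy by (simp add: field_simps)
  then have diff: "shifted_path y i - shifted_path x i = (limit_path y i - limit_path x i) + d"
    unfolding shifted_path_def by simp
  have "(1 + x) * (1 + y) \<le> (1 + b)^2" using xy by (simp add: power2_eq_square mult_mono)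
  then have lower: "margin / (1 + b)^2 * (y - x) \<le> d"
    unfolding d_def using margin_pos xy by (simp add: divide_left_mono)
  have "1 * 1 \<le> (1 + x) * (1 + y)" using xy by (intro mult_mono) auto
  then have upper: "d \<le> margin * (y - x)"
    unfolding d_def using margin_pos xy divide_left_mono[of 1 "(1 + x) * (1 + y)" "margin * (y - x)"]
    by simp
  have "0 \<le> limit_path y i - limit_path x i" "limit_path y i - limit_path x i \<le> y - x"
    using limit_path_mono[of x y i] limit_path_lipschitz[of x y i] xy by auto
  then show "margin / (1 + b)^2 * (y - x) \<le> shifted_path y i - shifted_path x i
      \<and> shifted_path y i - shifted_path x i \<le> (1 + margin) * (y - x)"
    using diff lower upper by (simp add: algebra_simps)
qed

text \<open>On \<open>(0, 1]\<close> the path interpolates a descent from \<open>shifted_path 1\<close> whose factors decrease strictly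
  from \<open>1/2\<close> towards \<open>1/4\<close>; this makes every component strictly decreasing.\<close>

definition initial_factor :: "nat \<Rightarrow> real" where
  "initial_factor k = 1/4 + 1 / 2 ^ (k + 2)"

definition initial_values :: "nat \<Rightarrow> 'i \<Rightarrow> real" where
  "initial_values = descent initial_factor (shifted_path 1)"

definition initial_knots :: "nat \<Rightarrow> real" where
  "initial_knots k = (1/2) ^ k"

lemma initial_factor_strict_decreasing: "initial_factor (Suc k) < initial_factor k"
  unfolding initial_factor_def by (simp add: field_simps)

lemma initial_factor_bounds: "1/4 \<le> initial_factor k" "initial_factor k \<le> 1/2"
proof -
  show "1/4 \<le> initial_factor k" unfolding initial_factor_def by simp
  have "(4::real) \<le> 2 ^ (k + 2)" using power_increasing[of 2 "k + 2" "2::real"] by simp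
  then show "initial_factor k \<le> 1/2" unfolding initial_factor_def by (simp add: field_simps)
qed

lemma initial_descent_premises:
  "decseq initial_factor" "\<And>k. 0 \<le> initial_factor k" "initial_factor 0 \<le> 1"
  "nonneg (shifted_path 1)" "\<And>i. Gam_c (initial_factor 0) (shifted_path 1) i \<le> shifted_path 1 i"
  using initial_factor_strict_decreasing initial_factor_bounds shifted_path_pos[of 1] shifted_path_decay[of 1]
  by (auto simp: decseq_Suc_iff less_imp_le nonneg_def initial_factor_def order_trans[of 0 "1/4"])

lemma initial_values_pos: "0 < initial_values k i"
  unfolding initial_values_def using descent_pos shifted_path_pos[of 1] by blast

lemma initial_values_strict_decreasing: "initial_values (Suc k) i < initial_values k i"
  unfolding initial_values_def
  by (rule descent_strictly_decreasing[OF initial_descent_premises initial_factor_strict_decreasing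
        shifted_path_pos]) simp

lemma initial_knots_values: "descending_knots initial_knots initial_values"
proof
  show "initial_knots \<longlonglongrightarrow> 0" unfolding initial_knots_def by (rule LIMSEQ_power_zero) simp
  show "initial_values (Suc j) i \<le> initial_values j i" for j i
    using initial_values_strict_decreasing less_imp_le by blast
  show "0 \<le> initial_values j i" for j i using initial_values_pos less_imp_le by blast
qed (simp_all add: initial_knots_def)

interpretation initial: descending_knots initial_knots initial_values
  by (rule initial_knots_values)

definition decay_path :: "real \<Rightarrow> 'i \<Rightarrow> real" where
  "decay_path r = (if r \<le> 1 then interp initial_knots initial_values r else shifted_path r)"

lemma decay_path_eq_shifted: "1 \<le> r \<Longrightarrow> decay_path r = shifted_path r"
  using initial.interp_knot[of 0] unfolding decay_path_def initial_values_def initial_knots_def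
  by (auto simp: fun_eq_iff)

lemma decay_path_nonpos: "r \<le> 0 \<Longrightarrow> decay_path r = (\<lambda>_. 0)"
  unfolding decay_path_def interp_def by simp

lemma decay_path_pos: "0 < r \<Longrightarrow> 0 < decay_path r i"
proof (cases "r \<le> 1")
  case True
  assume r: "0 < r"
  then obtain j where j: "initial_knots (Suc j) < r" "r \<le> initial_knots j"
    using initial.interp_segment True by (auto simp: initial_knots_def)
  then show ?thesis
    using initial.interp_between[of j r i] initial_values_pos[of "Suc j" i] True
    unfolding decay_path_def by fastforce
qed (simp add: decay_path_def shifted_path_pos)

lemma decay_path_nonneg: "0 \<le> r \<Longrightarrow> 0 \<le> decay_path r i"
  using decay_path_pos[of r i] decay_path_nonpos[of r] by (cases "r = 0") auto

lemma decay_path_decay: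
  assumes r: "0 \<le> r"
  shows "Gam_c (1/4) (decay_path r) i \<le> decay_path r i"
proof (cases "r \<le> 1")
  case True
  have "Gam_c (1/4) (interp initial_knots initial_values r) i \<le> interp initial_knots initial_values r i"
    unfolding initial_values_def
    by (rule interp_descent_decay[OF initial_descent_premises initial_knots_values[unfolded initial_values_def]])
      (use initial_factor_bounds(1) r True in \<open>auto simp: initial_knots_def\<close>)
  then show ?thesis using True by (simp add: decay_path_def)
next
  case False
  then have "Gam_c (1/4) (shifted_path r) i \<le> shifted_path r i"
    using Gam_c_mono_factor[of "1/4" "1/2" "shifted_path r" i] shifted_path_decay[of r i] by simp
  then show ?thesis using False unfolding decay_path_def by simp
qed

lemma decay_path_small: "0 < e \<Longrightarrow> \<exists>d>0. \<forall>r. 0 \<le> r \<and> r < d \<longrightarrow> decay_path r i < e"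
proof -
  assume e: "0 < e"
  have "(\<lambda>k. initial_values k i) \<longlonglongrightarrow> 0"
    unfolding initial_values_def by (rule descent_tendsto_0[OF initial_descent_premises])
  then obtain k where k: "initial_values k i < e"
    using e order_tendstoD(2) eventually_sequentially by (metis order_refl)
  have "decay_path r i < e" if "0 \<le> r" "r < initial_knots k" for r
  proof -
    have "initial_knots k \<le> 1" using initial.knots_antimono[of 0 k] by (simp add: initial_knots_def)
    then show ?thesis
      using initial.interp_le_value[of r k i] that k unfolding decay_path_def by simp
  qed
  then show ?thesis using initial.knots_pos[of k] by blast
qed

lemma decay_path_slope_bounded_initial:
  assumes a: "0 < a"
  shows "\<exists>c>0. \<exists>C. slope_bounded (\<lambda>r. decay_path r i) a 1 c C"
proof -
  obtain J where "initial_knots J < a" using initial.knot_less[OF a] by blast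
  then have J: "initial_knots (Suc J) \<le> a" using initial.knots_decreasing[of J] by linarith
  define slopes where "slopes = (\<lambda>j. initial.segment_slope j i) ` {..J}"
  have slope_pos: "0 < initial.segment_slope j i" for j
    unfolding initial.segment_slope_def
    using initial_values_strict_decreasing[of j i] initial.knots_decreasing[of j] by simp
  have "c \<le> initial.segment_slope j i \<and> initial.segment_slope j i \<le> C"
    if "j \<le> J" "c = Min slopes" "C = Max slopes" for j c C
    using that unfolding slopes_def by (auto intro: Min_le Max_ge)
  then have "slope_bounded (\<lambda>r. interp initial_knots initial_values r i)
      (initial_knots (Suc J)) (initial_knots 0) (Min slopes) (Max slopes)"
    by (intro initial.interp_slope_bounded) blast
  then have "slope_bounded (\<lambda>r. decay_path r i) a 1 (Min slopes) (Max slopes)"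
    by (rule slope_bounded_cong[OF slope_bounded_mono]) (use J in \<open>auto simp: decay_path_def initial_knots_def\<close>)
  moreover have "0 < Min slopes" unfolding slopes_def using slope_pos by (subst Min_gr_iff) auto
  ultimately show ?thesis by blast
qed

lemma decay_path_slope_bounded:
  assumes ab: "0 < a" "a \<le> b"
  shows "\<exists>c>0. \<exists>C. slope_bounded (\<lambda>r. decay_path r i) a b c C"
proof -
  obtain c C where c: "0 < c" "slope_bounded (\<lambda>r. decay_path r i) (min a 1) 1 c C"
    using decay_path_slope_bounded_initial[of "min a 1" i] ab by auto
  define c' C' where "c' = min c (margin / (1 + max b 1)^2)" and "C' = max C (1 + margin)"
  have "slope_bounded (\<lambda>r. shifted_path r i) 1 (max b 1) c' C'"
    by (rule slope_bounded_mono[OF shifted_path_slope_bounded[of "max b 1" i]]) (auto simp: c'_def C'_def)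
  then have far: "slope_bounded (\<lambda>r. decay_path r i) 1 (max b 1) c' C'"
    by (rule slope_bounded_cong) (simp add: decay_path_eq_shifted)
  have near: "slope_bounded (\<lambda>r. decay_path r i) (min a 1) 1 c' C'"
    by (rule slope_bounded_mono[OF c(2)]) (auto simp: c'_def C'_def)
  have "slope_bounded (\<lambda>r. decay_path r i) (min a 1) (max b 1) c' C'"
    by (rule slope_bounded_join[OF near far]) auto
  then have "slope_bounded (\<lambda>r. decay_path r i) a b c' C'" by (rule slope_bounded_mono) auto
  moreover have "0 < c'" using c(1) margin_pos unfolding c'_def C'_def by simp
  ultimately show ?thesis by blast
qed

lemma decay_path_Kinf: "Kinf (\<lambda>r. decay_path r i)"
proof (rule Kinf_if_slope_bounded)
  show "continuous (at 0 within {0..}) (\<lambda>r. decay_path r i)"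
    unfolding continuous_within_eps_delta
    using decay_path_small decay_path_nonneg decay_path_nonpos[of 0] by (fastforce simp: dist_real_def)
  show "\<exists>r\<ge>0. M \<le> decay_path r i" for M
  proof -
    obtain r0 where r0: "0 \<le> r0" "\<And>r. r0 \<le> r \<Longrightarrow> M + margin \<le> limit_path r i"
      using limit_path_large[of "M + margin" i] by blast
    have "margin / (1 + max r0 1) \<le> margin / 1"
      using margin_pos r0(1) by (intro divide_left_mono) auto
    then have "M \<le> decay_path (max r0 1) i"
      using r0(2)[of "max r0 1"] decay_path_eq_shifted[of "max r0 1"] unfolding shifted_path_def by simp
    then show ?thesis using r0(1) by (intro exI[of _ "max r0 1"]) auto
  qed
qed (use decay_path_nonpos decay_path_nonneg decay_path_slope_bounded in auto)

lemma decay_path_is_path_strict_decay: "path_strict_decay Iset gam mu decay_path"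
  unfolding path_strict_decay_def
proof (intro conjI allI impI)
  show "\<exists>\<rho>'. Kinf \<rho>' \<and> (\<forall>r\<ge>0. \<forall>i. Gam_rho \<rho>' Iset gam mu (decay_path r) i \<le> decay_path r i)"
  proof (intro exI[of _ "\<lambda>x. 1/4 * \<rho> x"] conjI)
    show "Kinf (\<lambda>x. 1/4 * \<rho> x)" by (rule Kinf_cmult[OF rho]) simp
    show "\<forall>r\<ge>0. \<forall>i. Gam_rho (\<lambda>x. 1/4 * \<rho> x) Iset gam mu (decay_path r) i \<le> decay_path r i"
      unfolding Gam_rho_cmult using decay_path_decay by blast
  qed
  show "\<exists>\<phi>min \<phi>max. Kinf \<phi>min \<and> Kinf \<phi>max \<and>
      (\<forall>r\<ge>0. \<forall>i. \<phi>min r \<le> decay_path r i \<and> decay_path r i \<le> \<phi>max r)"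
    using Kinf_Min[OF decay_path_Kinf] Kinf_sum[OF decay_path_Kinf] decay_path_nonneg
    by (intro exI[of _ "\<lambda>r. Min (range (\<lambda>i. decay_path r i))"] exI[of _ "\<lambda>r. \<Sum>i\<in>UNIV. decay_path r i"])
      (auto intro: member_le_sum)
  show "Kinf (\<lambda>r. decay_path r i)" for i by (rule decay_path_Kinf)
  show "\<exists>l L. 0 < l \<and> l \<le> L \<and> (\<forall>r1\<in>K. \<forall>r2\<in>K. \<forall>i.
      l * \<bar>r1 - r2\<bar> \<le> \<bar>the_inv_into {0..} (\<lambda>r. decay_path r i) r1 - the_inv_into {0..} (\<lambda>r. decay_path r i) r2\<bar>
    \<and> \<bar>the_inv_into {0..} (\<lambda>r. decay_path r i) r1 - the_inv_into {0..} (\<lambda>r. decay_path r i) r2\<bar> \<le> L * \<bar>r1 - r2\<bar>)"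
    if "compact K \<and> K \<subseteq> {0<..}" for K
    by (rule inv_into_bilipschitz_on_compact[OF decay_path_Kinf decay_path_slope_bounded])
      (use that in auto)
qed

end

theorem theorem4p13:
  fixes Iset :: "'i::finite \<Rightarrow> 'i set"
    and gam :: "'i \<Rightarrow> 'i \<Rightarrow> real \<Rightarrow> real"
    and mu :: "'i \<Rightarrow> ('i \<Rightarrow> real) \<Rightarrow> ennreal"
  assumes "gain_operator Iset gam mu"
    and "strongly_connected Iset"
  shows "(\<exists>\<sigma>. path_strict_decay Iset gam mu \<sigma>) \<longleftrightarrow>
         (\<exists>\<rho>. Kinf \<rho> \<and> NJI (Gam_rho \<rho> Iset gam mu))"
proof
  assume "\<exists>\<sigma>. path_strict_decay Iset gam mu \<sigma>"
  then show "\<exists>\<rho>. Kinf \<rho> \<and> NJI (Gam_rho \<rho> Iset gam mu)"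
    using gain_op.path_strict_decay_imp_NJI[OF gain_op.intro[OF assms(1)]] by blast
next
  assume "\<exists>\<rho>. Kinf \<rho> \<and> NJI (Gam_rho \<rho> Iset gam mu)"
  then obtain \<rho> where "Kinf \<rho>" "NJI (Gam_rho \<rho> Iset gam mu)" by blast
  then interpret nji_gain_op Iset gam mu \<rho>
    using assms by unfold_locales
  show "\<exists>\<sigma>. path_strict_decay Iset gam mu \<sigma>"
    using decay_path_is_path_strict_decay by blast
qed

end
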